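(* Let $t\mapsto U_t$ be a $\|\cdot\|_p$-continuous path in $\mathcal U_p(\mathcal H)$ such that every Cayley transform $C(U_t)$ is densely defined on the whole of $\mathcal H$ (i.e. $\overline{(U_t-\mathrm{Id})\mathcal H}=\mathcal H$). Then $t\mapsto C(U_t)$ is $p$-norm resolvent continuous: $\|(C(U_t)-\lambda)^{-1}-(C(U_s)-\lambda)^{-1}\|_p\to0$ as $t\to s$, for all $\lambda\notin\mathrm{spec}(C(U_s))$.
   Context: $\mathcal H$ separable Hilbert space; $\mathcal L^p$ Schatten class with norm $\|\cdot\|_p$; $\mathcal U_p(\mathcal H)$ the unitaries $U$ with $U-\mathrm{Id}\in\mathcal L^p$. The Cayley transform of a unitary $U$ is $C(U)=i(U+\mathrm{Id})(U-\mathrm{Id})^{-1}$ with domain $(U-\mathrm{Id})\mathcal H$, a self-adjoint operator on $\overline{(U-\mathrm{Id})\mathcal H}$. *)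

theory Defs
  imports "HOL-Analysis.Analysis"
begin

text \<open>The separable Hilbert space is modelled as l2(I) for a countable index type 'i
  (every separable Hilbert space is unitarily equivalent to one of these).
  Vectors are functions 'i => complex; operators are functions on them, only
  their behaviour on l2 matters.\<close>

type_synonym 'i vec = "'i \<Rightarrow> complex"
type_synonym 'i op = "'i vec \<Rightarrow> 'i vec"

definition l2 :: "('i::countable) vec set" where
  "l2 = {f. (\<lambda>i. (cmod (f i))\<^sup>2) summable_on UNIV}"

definition l2norm :: "('i::countable) vec \<Rightarrow> real" where
  "l2norm f = sqrt (infsum (\<lambda>i. (cmod (f i))\<^sup>2) UNIV)"

definition vadd :: "'i vec \<Rightarrow> 'i vec \<Rightarrow> 'i vec" where
  "vadd f g = (\<lambda>i. f i + g i)"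

definition vsub :: "'i vec \<Rightarrow> 'i vec \<Rightarrow> 'i vec" where
  "vsub f g = (\<lambda>i. f i - g i)"

definition vsmult :: "complex \<Rightarrow> 'i vec \<Rightarrow> 'i vec" where
  "vsmult c f = (\<lambda>i. c * f i)"

definition op_sub :: "'i op \<Rightarrow> 'i op \<Rightarrow> 'i op" where
  "op_sub S T = (\<lambda>f. vsub (S f) (T f))"

definition bounded_op :: "('i::countable) op \<Rightarrow> bool" where
  "bounded_op T \<longleftrightarrow>
     (\<forall>f\<in>l2. T f \<in> l2) \<and>
     (\<forall>f\<in>l2. \<forall>g\<in>l2. T (vadd f g) = vadd (T f) (T g)) \<and>
     (\<forall>f\<in>l2. \<forall>c. T (vsmult c f) = vsmult c (T f)) \<and>
     (\<exists>K. \<forall>f\<in>l2. l2norm (T f) \<le> K * l2norm f)"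

definition opnorm :: "('i::countable) op \<Rightarrow> real" where
  "opnorm T = Sup {l2norm (T f) | f. f \<in> l2 \<and> l2norm f \<le> 1}"

definition rank_le :: "('i::countable) op \<Rightarrow> nat \<Rightarrow> bool" where
  "rank_le F n \<longleftrightarrow> (\<exists>v :: nat \<Rightarrow> 'i vec. (\<forall>k<n. v k \<in> l2) \<and>
      (\<forall>f\<in>l2. \<exists>c :: nat \<Rightarrow> complex. F f = (\<lambda>i. \<Sum>k<n. c k * v k i)))"

text \<open>n-th singular value (approximation number), n = 0, 1, 2, ...\<close>
definition sing_val :: "('i::countable) op \<Rightarrow> nat \<Rightarrow> real" where
  "sing_val T n = Inf {opnorm (op_sub T F) | F. bounded_op F \<and> rank_le F n}"

definition schatten :: "real \<Rightarrow> ('i::countable) op \<Rightarrow> bool" where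
  "schatten p T \<longleftrightarrow> bounded_op T \<and> summable (\<lambda>n. sing_val T n powr p)"

definition snorm :: "real \<Rightarrow> ('i::countable) op \<Rightarrow> real" where
  "snorm p T = (\<Sum>n. sing_val T n powr p) powr (1 / p)"

definition unitary_op :: "('i::countable) op \<Rightarrow> bool" where
  "unitary_op U \<longleftrightarrow> bounded_op U \<and> (\<forall>f\<in>l2. l2norm (U f) = l2norm f) \<and> U ` l2 = l2"

definition U_p :: "real \<Rightarrow> ('i::countable) op set" where
  "U_p p = {U. unitary_op U \<and> schatten p (op_sub U id)}"

text \<open>Cayley transform C(U) = i(U+Id)(U-Id)^{-1}, with domain (U-Id)H.\<close>
definition cayley_dom :: "('i::countable) op \<Rightarrow> 'i vec set" where
  "cayley_dom U = (\<lambda>x. vsub (U x) x) ` l2"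

definition cayley :: "('i::countable) op \<Rightarrow> 'i op" where
  "cayley U y = (let x = (THE x. x \<in> l2 \<and> vsub (U x) x = y) in vsmult \<i> (vadd (U x) x))"

definition dense_in_l2 :: "('i::countable) vec set \<Rightarrow> bool" where
  "dense_in_l2 D \<longleftrightarrow> (\<forall>f\<in>l2. \<forall>e>0. \<exists>g\<in>D. l2norm (vsub f g) < e)"

definition cayley_resolvent :: "('i::countable) op \<Rightarrow> complex \<Rightarrow> 'i op" where
  "cayley_resolvent U z y =
     (THE x. x \<in> cayley_dom U \<and> vsub (cayley U x) (vsmult z x) = y)"

definition cayley_resolvent_set :: "('i::countable) op \<Rightarrow> complex set" where
  "cayley_resolvent_set U = {z.
     bij_betw (\<lambda>x. vsub (cayley U x) (vsmult z x)) (cayley_dom U) l2 \<and>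
     bounded_op (cayley_resolvent U z)}"

definition cayley_spec :: "('i::countable) op \<Rightarrow> complex set" where
  "cayley_spec U = - cayley_resolvent_set U"

end

theory Submission
  imports Defs
begin

text \<open>
  For a unitary U without fixed vectors (which is what density of the range of U - Id
  amounts to) one has (C(U) - z)(U - Id) = M(U) := (i - z) U + (i + z) on l2. Hence z lies
  in the resolvent set of C(U) exactly when M(U) is invertible, and then
  (C(U) - z)^-1 = (U - Id) M(U)^-1. Since M(U_t) = M(U_s) + (i - z)(U_t - U_s), a Banach
  fixed point argument keeps M(U_t) invertible, with a uniformly bounded inverse, as long as
  the operator norm of U_t - U_s (which is at most its p-norm) is small. A direct computation
  gives the resolvent identity
  (C(U_t) - z)^-1 - (C(U_s) - z)^-1 = 2i M(U_t)^-1 (U_t - U_s) M(U_s)^-1,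
  and since the Schatten classes are ideals, s_n(A X B) <= |A| |B| s_n(X), the p-norm of
  the left-hand side is at most a constant times the p-norm of U_t - U_s.
\<close>

section \<open>The sequence space l2\<close>

lemma vadd_apply [simp]: "vadd f g i = f i + g i"
  by (simp add: vadd_def)

lemma vsub_apply [simp]: "vsub f g i = f i - g i"
  by (simp add: vsub_def)

lemma vsmult_apply [simp]: "vsmult c f i = c * f i"
  by (simp add: vsmult_def)

lemma op_sub_apply [simp]: "op_sub S T f = vsub (S f) (T f)"
  by (simp add: op_sub_def)

lemma l2_zero [simp]: "(\<lambda>i. 0) \<in> l2"
  by (simp add: l2_def)

lemma cmod_add_squared_le: "(cmod (a + b))\<^sup>2 \<le> 2 * (cmod a)\<^sup>2 + 2 * (cmod b)\<^sup>2"
proof -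
  have "(cmod (a + b))\<^sup>2 \<le> (cmod a + cmod b)\<^sup>2"
    by (simp add: norm_triangle_ineq power_mono)
  then show ?thesis
    using sum_squares_bound[of "cmod a" "cmod b"] by (simp add: power2_sum)
qed

lemma l2_add: "f \<in> l2 \<Longrightarrow> g \<in> l2 \<Longrightarrow> (\<lambda>i. f i + g i) \<in> l2"
  unfolding l2_def
proof safe
  assume "(\<lambda>i. (cmod (f i))\<^sup>2) summable_on UNIV" "(\<lambda>i. (cmod (g i))\<^sup>2) summable_on UNIV"
  then have "(\<lambda>i. 2 * (cmod (f i))\<^sup>2 + 2 * (cmod (g i))\<^sup>2) summable_on UNIV"
    by (intro summable_on_add summable_on_cmult_right)
  then show "(\<lambda>i. (cmod (f i + g i))\<^sup>2) summable_on UNIV"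
    by (rule summable_on_comparison_test) (simp_all add: cmod_add_squared_le)
qed

lemma l2_smult: "f \<in> l2 \<Longrightarrow> (\<lambda>i. c * f i) \<in> l2"
  unfolding l2_def
  by (simp add: norm_mult power_mult_distrib summable_on_cmult_right)

lemma l2_uminus: "f \<in> l2 \<Longrightarrow> (\<lambda>i. - f i) \<in> l2"
  using l2_smult[of f "-1"] by simp

lemma l2_diff: "f \<in> l2 \<Longrightarrow> g \<in> l2 \<Longrightarrow> (\<lambda>i. f i - g i) \<in> l2"
  using l2_add[of f "\<lambda>i. - g i"] l2_uminus[of g] by simp

lemma vadd_l2 [simp]: "f \<in> l2 \<Longrightarrow> g \<in> l2 \<Longrightarrow> vadd f g \<in> l2"
  by (simp add: vadd_def l2_add)

lemma vsub_l2 [simp]: "f \<in> l2 \<Longrightarrow> g \<in> l2 \<Longrightarrow> vsub f g \<in> l2"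
  by (simp add: vsub_def l2_diff)

lemma vsmult_l2 [simp]: "f \<in> l2 \<Longrightarrow> vsmult c f \<in> l2"
  by (simp add: vsmult_def l2_smult)

lemma l2_inner_summable:
  assumes "f \<in> l2" "g \<in> l2"
  shows "(\<lambda>i. Re (f i * cnj (g i))) summable_on UNIV"
proof -
  have "(\<lambda>i. (cmod (f i))\<^sup>2 + (cmod (g i))\<^sup>2) summable_on UNIV"
    using assms by (intro summable_on_add) (auto simp: l2_def)
  then have "(\<lambda>i. norm (Re (f i * cnj (g i)))) summable_on UNIV"
  proof (rule Infinite_Sum.abs_summable_on_comparison_test')
    fix i
    have "norm (Re (f i * cnj (g i))) \<le> cmod (f i) * cmod (g i)"
      using abs_Re_le_cmod[of "f i * cnj (g i)"] by (simp add: norm_mult)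
    also have "\<dots> \<le> (cmod (f i))\<^sup>2 + (cmod (g i))\<^sup>2"
      using sum_squares_bound[of "cmod (f i)" "cmod (g i)"]
        mult_nonneg_nonneg[OF norm_ge_zero norm_ge_zero, of "f i" "g i"] by linarith
    finally show "norm (Re (f i * cnj (g i))) \<le> (cmod (f i))\<^sup>2 + (cmod (g i))\<^sup>2" .
  qed
  then show ?thesis
    using summable_on_iff_abs_summable_on_real by blast
qed

lemma Re_mult_cnj: "Re (z * cnj z) = (cmod z)\<^sup>2"
  using complex_norm_square[of z] by (metis Re_complex_of_real)

lemma l2norm_nonneg: "0 \<le> l2norm f"
  by (simp add: l2norm_def infsum_nonneg)

lemma l2norm_zero [simp]: "l2norm (\<lambda>i. 0) = 0"
  by (simp add: l2norm_def)

lemma l2norm_smult: "l2norm (vsmult c f) = cmod c * l2norm f"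
proof -
  have "(\<Sum>\<^sub>\<infinity>i. (cmod (c * f i))\<^sup>2) = (\<Sum>\<^sub>\<infinity>i. (cmod c)\<^sup>2 * (cmod (f i))\<^sup>2)"
    by (simp add: norm_mult power_mult_distrib)
  also have "\<dots> = (cmod c)\<^sup>2 * (\<Sum>\<^sub>\<infinity>i. (cmod (f i))\<^sup>2)"
    by (rule infsum_cmult_right')
  finally show ?thesis
    by (simp add: l2norm_def vsmult_def real_sqrt_mult)
qed

lemma l2norm_vsub_commute: "l2norm (vsub f g) = l2norm (vsub g f)"
proof -
  have "vsub f g = vsmult (-1) (vsub g f)"
    by (simp add: fun_eq_iff)
  then show ?thesis
    by (simp add: l2norm_smult)
qed

lemma finite_sum_squares_le_l2norm:
  assumes "f \<in> l2" "finite F"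
  shows "(\<Sum>i\<in>F. (cmod (f i))\<^sup>2) \<le> (l2norm f)\<^sup>2"
proof -
  have "(\<Sum>i\<in>F. (cmod (f i))\<^sup>2) \<le> (\<Sum>\<^sub>\<infinity>i. (cmod (f i))\<^sup>2)"
    using assms by (intro finite_sum_le_infsum) (auto simp: l2_def)
  also have "\<dots> = (l2norm f)\<^sup>2"
    by (simp add: l2norm_def infsum_nonneg)
  finally show ?thesis .
qed

lemma cmod_le_l2norm:
  assumes "f \<in> l2"
  shows "cmod (f i) \<le> l2norm f"
proof (rule power2_le_imp_le)
  show "(cmod (f i))\<^sup>2 \<le> (l2norm f)\<^sup>2"
    using finite_sum_squares_le_l2norm[OF assms, of "{i}"] by simp
qed (rule l2norm_nonneg)

lemma l2_if_finite_sums_bounded: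
  assumes sums: "\<And>F. finite F \<Longrightarrow> (\<Sum>i\<in>F. (cmod (f i))\<^sup>2) \<le> e\<^sup>2" and e: "0 \<le> e"
  shows "f \<in> l2" "l2norm f \<le> e"
proof -
  have summable: "(\<lambda>i. (cmod (f i))\<^sup>2) summable_on UNIV"
    by (rule nonneg_bdd_above_summable_on) (auto intro!: bdd_aboveI2 sums)
  then show "f \<in> l2"
    by (simp add: l2_def)
  have "(\<Sum>\<^sub>\<infinity>i. (cmod (f i))\<^sup>2) \<le> e\<^sup>2"
    by (rule infsum_le_finite_sums[OF summable sums])
  then have "l2norm f \<le> sqrt (e\<^sup>2)"
    unfolding l2norm_def by (rule real_sqrt_le_mono)
  then show "l2norm f \<le> e"
    using e by simp
qed

section \<open>l2 as a real Hilbert space\<close>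

text \<open>A type of l2 vectors, so that the library's Banach fixed point theorem applies.\<close>

typedef ('i::countable) l2t = "l2 :: 'i vec set"
  morphisms vec_of Abs_l2t
  by (rule exI[of _ "\<lambda>i. 0"]) simp

setup_lifting type_definition_l2t

instantiation l2t :: (countable) real_inner
begin

lift_definition zero_l2t :: "'a l2t" is "\<lambda>i. 0"
  by simp
lift_definition plus_l2t :: "'a l2t \<Rightarrow> 'a l2t \<Rightarrow> 'a l2t" is "\<lambda>f g i. f i + g i"
  by (rule l2_add)
lift_definition minus_l2t :: "'a l2t \<Rightarrow> 'a l2t \<Rightarrow> 'a l2t" is "\<lambda>f g i. f i - g i"
  by (rule l2_diff)
lift_definition uminus_l2t :: "'a l2t \<Rightarrow> 'a l2t" is "\<lambda>f i. - f i"
  by (rule l2_uminus)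
lift_definition scaleR_l2t :: "real \<Rightarrow> 'a l2t \<Rightarrow> 'a l2t" is "\<lambda>r f i. of_real r * f i"
  by (rule l2_smult)
lift_definition norm_l2t :: "'a l2t \<Rightarrow> real" is l2norm .
lift_definition inner_l2t :: "'a l2t \<Rightarrow> 'a l2t \<Rightarrow> real"
  is "\<lambda>f g. \<Sum>\<^sub>\<infinity>i. Re (f i * cnj (g i))" .

definition sgn_l2t :: "'a l2t \<Rightarrow> 'a l2t" where
  "sgn_l2t x = Abs_l2t (\<lambda>i. of_real (inverse (l2norm (vec_of x))) * vec_of x i)"

definition dist_l2t :: "'a l2t \<Rightarrow> 'a l2t \<Rightarrow> real" where
  "dist_l2t x y = l2norm (\<lambda>i. vec_of x i - vec_of y i)"

definition uniformity_l2t :: "('a l2t \<times> 'a l2t) filter" where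
  "uniformity_l2t = (INF e\<in>{0<..}. principal {(x, y). l2norm (\<lambda>i. vec_of x i - vec_of y i) < e})"

definition open_l2t :: "'a l2t set \<Rightarrow> bool" where
  "open_l2t U = (\<forall>x\<in>U. \<forall>\<^sub>F (x', y) in uniformity. x' = x \<longrightarrow> y \<in> U)"

instance
proof
  fix x y z :: "'a l2t" and a b :: real
  show "x + y + z = x + (y + z)" by transfer (simp add: algebra_simps)
  show "x + y = y + x" by transfer (simp add: algebra_simps)
  show "0 + x = x" by transfer simp
  show "- x + x = 0" by transfer simp
  show "x - y = x + - y" by transfer simp
  show "a *\<^sub>R (x + y) = a *\<^sub>R x + a *\<^sub>R y" by transfer (simp add: algebra_simps)
  show "(a + b) *\<^sub>R x = a *\<^sub>R x + b *\<^sub>R x" by transfer (simp add: algebra_simps)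
  show "a *\<^sub>R b *\<^sub>R x = (a * b) *\<^sub>R x" by transfer (simp add: algebra_simps)
  show "1 *\<^sub>R x = x" by transfer simp
  show "sgn x = inverse (norm x) *\<^sub>R x"
    by (simp add: vec_of_inject[symmetric] sgn_l2t_def scaleR_l2t.rep_eq norm_l2t.rep_eq
        Abs_l2t_inverse l2_smult vec_of[simplified])
  show "dist x y = norm (x - y)"
    by (simp add: dist_l2t_def norm_l2t.rep_eq minus_l2t.rep_eq)
  show "inner x y = inner y x"
    by transfer (simp add: mult.commute)
  show "inner (x + y) z = inner x z + inner y z"
  proof transfer
    fix f g h :: "'a vec"
    assume "f \<in> l2" "g \<in> l2" "h \<in> l2"
    show "(\<Sum>\<^sub>\<infinity>i. Re ((f i + g i) * cnj (h i))) =
        (\<Sum>\<^sub>\<infinity>i. Re (f i * cnj (h i))) + (\<Sum>\<^sub>\<infinity>i. Re (g i * cnj (h i)))"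
      unfolding distrib_right plus_complex.sel by (rule infsum_add; rule l2_inner_summable) fact+
  qed
  show "inner (a *\<^sub>R x) y = a * inner x y"
  proof transfer
    fix f g :: "'a vec" and a :: real
    have "(\<Sum>\<^sub>\<infinity>i. Re (complex_of_real a * f i * cnj (g i))) = (\<Sum>\<^sub>\<infinity>i. a * Re (f i * cnj (g i)))"
      by (simp add: mult.assoc)
    also have "\<dots> = a * (\<Sum>\<^sub>\<infinity>i. Re (f i * cnj (g i)))"
      by (rule infsum_cmult_right')
    finally show "(\<Sum>\<^sub>\<infinity>i. Re (complex_of_real a * f i * cnj (g i))) = a * (\<Sum>\<^sub>\<infinity>i. Re (f i * cnj (g i)))" .
  qed
  show "0 \<le> inner x x"
    by transfer (simp only: Re_mult_cnj, simp add: infsum_nonneg)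
  show "(inner x x = 0) = (x = 0)"
  proof transfer
    fix f :: "'a vec"
    assume f: "f \<in> l2"
    have "(\<Sum>\<^sub>\<infinity>i. (cmod (f i))\<^sup>2) = 0 \<Longrightarrow> (cmod (f i))\<^sup>2 = 0" for i
      using f by (intro nonneg_infsum_le_0D[of "\<lambda>i. (cmod (f i))\<^sup>2" UNIV]) (auto simp: l2_def)
    then show "((\<Sum>\<^sub>\<infinity>i. Re (f i * cnj (f i))) = 0) = (f = (\<lambda>i. 0))"
      by (auto simp only: Re_mult_cnj) auto
  qed
  show "norm x = sqrt (inner x x)"
    by transfer (simp only: Re_mult_cnj l2norm_def)
qed (simp_all add: uniformity_l2t_def open_l2t_def dist_l2t_def)

end

lemma vec_of_l2 [simp]: "vec_of x \<in> l2"
  using vec_of by blast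

lemma norm_Abs_l2t: "f \<in> l2 \<Longrightarrow> norm (Abs_l2t f) = l2norm f"
  by (simp add: norm_l2t.rep_eq Abs_l2t_inverse)

lemma dist_l2t_eq: "dist x y = l2norm (vsub (vec_of x) (vec_of y))"
  by (simp add: dist_norm norm_l2t.rep_eq minus_l2t.rep_eq vsub_def)

lemma Abs_l2t_vsub: "f \<in> l2 \<Longrightarrow> g \<in> l2 \<Longrightarrow> Abs_l2t (vsub f g) = Abs_l2t f - Abs_l2t g"
  by (simp add: vec_of_inject[symmetric] minus_l2t.rep_eq Abs_l2t_inverse vsub_def l2_diff)

lemma Abs_l2t_vadd: "f \<in> l2 \<Longrightarrow> g \<in> l2 \<Longrightarrow> Abs_l2t (vadd f g) = Abs_l2t f + Abs_l2t g"
  by (simp add: vec_of_inject[symmetric] plus_l2t.rep_eq Abs_l2t_inverse vadd_def l2_add)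

lemma l2norm_vsub_le: "f \<in> l2 \<Longrightarrow> g \<in> l2 \<Longrightarrow> l2norm (vsub f g) \<le> l2norm f + l2norm g"
  using norm_triangle_ineq4[of "Abs_l2t f" "Abs_l2t g"] by (simp add: Abs_l2t_vsub[symmetric] norm_Abs_l2t)

lemma l2norm_eq_0_iff: "f \<in> l2 \<Longrightarrow> l2norm f = 0 \<longleftrightarrow> f = (\<lambda>i. 0)"
  using norm_eq_zero[of "Abs_l2t f"] Abs_l2t_inject[of f "\<lambda>i. 0"]
  by (simp add: norm_Abs_l2t zero_l2t_def)

text \<open>Fatou's lemma in l2, via finite partial sums.\<close>

lemma l2_pointwise_limit_close:
  assumes x: "\<And>m. x m \<in> l2" and L: "\<And>i. (\<lambda>m. x m i) \<longlonglongrightarrow> L i"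
    and close: "\<And>m. N \<le> m \<Longrightarrow> l2norm (vsub f (x m)) \<le> e" and f: "f \<in> l2"
  shows "vsub f L \<in> l2" "l2norm (vsub f L) \<le> e"
proof -
  have e: "0 \<le> e"
    using close[of N] l2norm_nonneg order_trans by blast
  have "(\<Sum>i\<in>F. (cmod (vsub f L i))\<^sup>2) \<le> e\<^sup>2" if "finite F" for F
  proof (rule tendsto_upperbound)
    show "(\<lambda>m. \<Sum>i\<in>F. (cmod (vsub f (x m) i))\<^sup>2) \<longlonglongrightarrow> (\<Sum>i\<in>F. (cmod (vsub f L i))\<^sup>2)"
      unfolding vsub_apply by (intro tendsto_intros L)
    show "\<forall>\<^sub>F m in sequentially. (\<Sum>i\<in>F. (cmod (vsub f (x m) i))\<^sup>2) \<le> e\<^sup>2"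
    proof (rule eventually_sequentiallyI[of N])
      fix m
      assume "N \<le> m"
      have "(\<Sum>i\<in>F. (cmod (vsub f (x m) i))\<^sup>2) \<le> (l2norm (vsub f (x m)))\<^sup>2"
        using \<open>finite F\<close> x f by (intro finite_sum_squares_le_l2norm) (simp_all add: l2_diff)
      also have "\<dots> \<le> e\<^sup>2"
        using close[OF \<open>N \<le> m\<close>] l2norm_nonneg by (rule power_mono)
      finally show "(\<Sum>i\<in>F. (cmod (vsub f (x m) i))\<^sup>2) \<le> e\<^sup>2" .
    qed
  qed simp
  then show "vsub f L \<in> l2" "l2norm (vsub f L) \<le> e"
    using l2_if_finite_sums_bounded[of "vsub f L" e] e by simp_all
qed

instance l2t :: (countable) complete_space
proof
  fix X :: "nat \<Rightarrow> 'a l2t"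
  assume Cauchy: "Cauchy X"
  define x where "x n = vec_of (X n)" for n
  define L where "L i = lim (\<lambda>n. x n i)" for i
  have dist_X: "dist (X n) (X m) = l2norm (vsub (x n) (x m))" for n m
    by (simp add: dist_l2t_eq x_def)
  have "Cauchy (\<lambda>n. x n i)" for i
  proof (rule metric_CauchyI)
    fix e :: real
    assume "0 < e"
    with Cauchy obtain N where N: "\<forall>m\<ge>N. \<forall>n\<ge>N. dist (X m) (X n) < e"
      using metric_CauchyD by blast
    have "dist (x m i) (x n i) < e" if "N \<le> m" "N \<le> n" for m n
    proof -
      have "dist (x m i) (x n i) \<le> dist (X m) (X n)"
        unfolding dist_X dist_complex_def using cmod_le_l2norm[of "vsub (x m) (x n)" i]
        by (simp add: x_def)
      also have "\<dots> < e"
        using N that by blast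
      finally show ?thesis .
    qed
    then show "\<exists>M. \<forall>m\<ge>M. \<forall>n\<ge>M. dist (x m i) (x n i) < e"
      by blast
  qed
  then have L: "(\<lambda>n. x n i) \<longlonglongrightarrow> L i" for i
    unfolding L_def by (simp add: Cauchy_convergent_iff convergent_LIMSEQ_iff)
  have close: "\<exists>N. \<forall>n\<ge>N. vsub (x n) L \<in> l2 \<and> l2norm (vsub (x n) L) \<le> e" if "e > 0" for e
  proof -
    obtain N where N: "\<forall>m\<ge>N. \<forall>n\<ge>N. dist (X m) (X n) < e"
      using Cauchy metric_CauchyD \<open>e > 0\<close> by blast
    have "l2norm (vsub (x n) (x m)) \<le> e" if "N \<le> n" "N \<le> m" for n m
      using N that by (metis dist_X less_imp_le)
    then have "vsub (x n) L \<in> l2 \<and> l2norm (vsub (x n) L) \<le> e" if "N \<le> n" for n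
      using l2_pointwise_limit_close[where N = N and f = "x n" and e = e, OF _ L] that
      by (simp add: x_def)
    then show ?thesis
      by blast
  qed
  obtain N where "vsub (x N) L \<in> l2"
    using close[of 1] by auto
  then have L_l2: "L \<in> l2"
    using vsub_l2[of "x N" "vsub (x N) L"] by (simp add: x_def vsub_def)
  have "X \<longlonglongrightarrow> Abs_l2t L"
  proof (rule metric_LIMSEQ_I)
    fix e :: real
    assume "0 < e"
    then obtain N where N: "\<forall>n\<ge>N. vsub (x n) L \<in> l2 \<and> l2norm (vsub (x n) L) \<le> e / 2"
      using close[of "e / 2"] by auto
    have "dist (X n) (Abs_l2t L) < e" if "N \<le> n" for n
    proof -
      have "dist (X n) (Abs_l2t L) = l2norm (vsub (x n) L)"
        using L_l2 by (simp add: dist_l2t_eq Abs_l2t_inverse x_def)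
      also have "\<dots> \<le> e / 2"
        using N that by blast
      finally show ?thesis
        using \<open>0 < e\<close> by simp
    qed
    then show "\<exists>N. \<forall>n\<ge>N. dist (X n) (Abs_l2t L) < e"
      by blast
  qed
  then show "convergent X"
    by (rule convergentI)
qed

section \<open>Bounded operators on l2\<close>

definition l2_linear :: "('i::countable) op \<Rightarrow> bool" where
  "l2_linear T \<longleftrightarrow> (\<forall>f\<in>l2. T f \<in> l2) \<and>
     (\<forall>f\<in>l2. \<forall>g\<in>l2. T (vadd f g) = vadd (T f) (T g)) \<and>
     (\<forall>f\<in>l2. \<forall>c. T (vsmult c f) = vsmult c (T f))"

lemma bounded_op_iff: "bounded_op T \<longleftrightarrow> l2_linear T \<and> (\<exists>K. \<forall>f\<in>l2. l2norm (T f) \<le> K * l2norm f)"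
  by (simp add: bounded_op_def l2_linear_def)

lemma bounded_op_l2_linear: "bounded_op T \<Longrightarrow> l2_linear T"
  by (simp add: bounded_op_iff)

lemma l2_linear_l2: "l2_linear T \<Longrightarrow> f \<in> l2 \<Longrightarrow> T f \<in> l2"
  by (simp add: l2_linear_def)

lemma l2_linear_vadd: "l2_linear T \<Longrightarrow> f \<in> l2 \<Longrightarrow> g \<in> l2 \<Longrightarrow> T (vadd f g) = vadd (T f) (T g)"
  by (simp add: l2_linear_def)

lemma l2_linear_vsmult: "l2_linear T \<Longrightarrow> f \<in> l2 \<Longrightarrow> T (vsmult c f) = vsmult c (T f)"
  by (simp add: l2_linear_def)

lemma l2_linear_vsub:
  assumes T: "l2_linear T" and "f \<in> l2" "g \<in> l2"
  shows "T (vsub f g) = vsub (T f) (T g)"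
proof -
  have "vsub f g = vadd f (vsmult (-1) g)"
    by (simp add: fun_eq_iff)
  then have "T (vsub f g) = vadd (T f) (vsmult (-1) (T g))"
    using assms by (simp only: l2_linear_vadd vsmult_l2 l2_linear_vsmult)
  then show ?thesis
    by (simp add: fun_eq_iff)
qed

lemma l2_linear_zero: "l2_linear T \<Longrightarrow> T (\<lambda>i. 0) = (\<lambda>i. 0)"
  using l2_linear_vsmult[of T "\<lambda>i. 0" 0] by (simp add: vsmult_def)

lemma l2_linear_comp: "l2_linear A \<Longrightarrow> l2_linear B \<Longrightarrow> l2_linear (\<lambda>f. A (B f))"
  unfolding l2_linear_def by simp

lemma l2_linear_op_sub: "l2_linear A \<Longrightarrow> l2_linear B \<Longrightarrow> l2_linear (op_sub A B)"
  unfolding l2_linear_def by (simp add: fun_eq_iff algebra_simps)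

lemma l2_linear_scaled: "l2_linear A \<Longrightarrow> l2_linear (\<lambda>f. vsmult c (A f))"
  unfolding l2_linear_def by (simp add: fun_eq_iff algebra_simps)

lemma l2_linear_cong: "\<forall>f\<in>l2. T f = T' f \<Longrightarrow> l2_linear T \<Longrightarrow> l2_linear T'"
  unfolding l2_linear_def by simp

lemma bounded_op_cong: "\<forall>f\<in>l2. T f = T' f \<Longrightarrow> bounded_op T \<Longrightarrow> bounded_op T'"
  unfolding bounded_op_iff using l2_linear_cong by metis

lemma bounded_op_zero: "bounded_op (\<lambda>f i. 0)"
  unfolding bounded_op_iff l2_linear_def by (auto simp: fun_eq_iff intro!: exI[of _ 0])

lemma bounded_op_bound_nonneg:
  assumes "bounded_op T"
  obtains K where "0 \<le> K" "\<forall>f\<in>l2. l2norm (T f) \<le> K * l2norm f"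
proof -
  obtain K where K: "\<forall>f\<in>l2. l2norm (T f) \<le> K * l2norm f"
    using assms by (auto simp: bounded_op_iff)
  have "\<forall>f\<in>l2. l2norm (T f) \<le> max K 0 * l2norm f"
    using K by (metis l2norm_nonneg max.cobounded1 mult_right_mono order_trans)
  then show ?thesis
    using that[of "max K 0"] by simp
qed

lemma opnorm_least:
  assumes "\<forall>f\<in>l2. l2norm (T f) \<le> K * l2norm f" "0 \<le> K"
  shows "opnorm T \<le> K"
  unfolding opnorm_def
proof (rule cSup_least)
  show "{l2norm (T f) |f. f \<in> l2 \<and> l2norm f \<le> 1} \<noteq> {}"
    using l2_zero l2norm_zero by fastforce
next
  fix x
  assume "x \<in> {l2norm (T f) |f. f \<in> l2 \<and> l2norm f \<le> 1}"
  then obtain f where f: "f \<in> l2" "l2norm f \<le> 1" and x: "x = l2norm (T f)"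
    by auto
  have "x \<le> K * l2norm f"
    using assms f x by auto
  also have "\<dots> \<le> K"
    using f assms by (simp add: mult_left_le)
  finally show "x \<le> K" .
qed

lemma bdd_above_opnorm_set:
  assumes "bounded_op T"
  shows "bdd_above {l2norm (T f) |f. f \<in> l2 \<and> l2norm f \<le> 1}"
proof -
  obtain K where K: "0 \<le> K" "\<forall>f\<in>l2. l2norm (T f) \<le> K * l2norm f"
    using bounded_op_bound_nonneg[OF assms] by blast
  show ?thesis
  proof (rule bdd_aboveI)
    fix x
    assume "x \<in> {l2norm (T f) |f. f \<in> l2 \<and> l2norm f \<le> 1}"
    then obtain f where f: "f \<in> l2" "l2norm f \<le> 1" and x: "x = l2norm (T f)"
      by auto
    have "x \<le> K * l2norm f"
      using K f x by auto
    also have "\<dots> \<le> K"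
      using f K by (simp add: mult_left_le)
    finally show "x \<le> K" .
  qed
qed

lemma l2norm_le_opnorm:
  assumes T: "bounded_op T" and f: "f \<in> l2"
  shows "l2norm (T f) \<le> opnorm T * l2norm f"
proof (cases "l2norm f = 0")
  case True
  then have "f = (\<lambda>i. 0)"
    using f l2norm_eq_0_iff by blast
  then show ?thesis
    using l2_linear_zero[OF bounded_op_l2_linear[OF T]] True by simp
next
  case False
  define a where "a = l2norm f"
  have a: "a > 0"
    using False l2norm_nonneg[of f] a_def by simp
  define g where "g = vsmult (complex_of_real (1 / a)) f"
  have g: "g \<in> l2" "l2norm g \<le> 1"
    using f a by (simp_all add: g_def l2norm_smult a_def norm_divide)
  have "l2norm (T g) \<le> opnorm T"
    unfolding opnorm_def by (rule cSup_upper) (use g bdd_above_opnorm_set[OF T] in auto)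
  moreover have "l2norm (T g) = l2norm (T f) / a"
    using a by (simp add: g_def l2_linear_vsmult[OF bounded_op_l2_linear[OF T] f] l2norm_smult norm_divide)
  ultimately show ?thesis
    using a by (simp add: a_def pos_divide_le_eq mult.commute)
qed

lemma opnorm_nonneg: "bounded_op T \<Longrightarrow> 0 \<le> opnorm T"
  unfolding opnorm_def
  by (rule cSup_upper2[where x = 0])
    (auto intro!: exI[where x = "\<lambda>i. 0"] bdd_above_opnorm_set simp: l2_linear_zero bounded_op_l2_linear)

lemma opnorm_cong: "\<forall>f\<in>l2. T f = T' f \<Longrightarrow> opnorm T = opnorm T'"
  unfolding opnorm_def by (rule arg_cong[where f = Sup]) (auto; metis)

lemma bounded_op_comp:
  assumes A: "bounded_op A" and B: "bounded_op B"
  shows "bounded_op (\<lambda>f. A (B f))" "opnorm (\<lambda>f. A (B f)) \<le> opnorm A * opnorm B"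
proof -
  have bound: "\<forall>f\<in>l2. l2norm (A (B f)) \<le> (opnorm A * opnorm B) * l2norm f"
  proof
    fix f :: "'a vec"
    assume f: "f \<in> l2"
    have "l2norm (A (B f)) \<le> opnorm A * l2norm (B f)"
      using A B f by (simp add: l2norm_le_opnorm l2_linear_l2 bounded_op_l2_linear)
    also have "\<dots> \<le> opnorm A * (opnorm B * l2norm f)"
      using A B f by (simp add: l2norm_le_opnorm mult_left_mono opnorm_nonneg)
    finally show "l2norm (A (B f)) \<le> (opnorm A * opnorm B) * l2norm f"
      by (simp add: mult.assoc)
  qed
  then show "bounded_op (\<lambda>f. A (B f))"
    unfolding bounded_op_iff using l2_linear_comp A B bounded_op_l2_linear by blast
  show "opnorm (\<lambda>f. A (B f)) \<le> opnorm A * opnorm B"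
    using bound by (rule opnorm_least) (simp add: opnorm_nonneg A B)
qed

lemma bounded_op_sub:
  assumes A: "bounded_op A" and B: "bounded_op B"
  shows "bounded_op (op_sub A B)" "opnorm (op_sub A B) \<le> opnorm A + opnorm B"
proof -
  have bound: "\<forall>f\<in>l2. l2norm (op_sub A B f) \<le> (opnorm A + opnorm B) * l2norm f"
  proof
    fix f :: "'a vec"
    assume f: "f \<in> l2"
    have "l2norm (op_sub A B f) \<le> l2norm (A f) + l2norm (B f)"
      using A B f by (simp add: l2norm_vsub_le l2_linear_l2 bounded_op_l2_linear)
    also have "\<dots> \<le> opnorm A * l2norm f + opnorm B * l2norm f"
      by (intro add_mono l2norm_le_opnorm A B f)
    finally show "l2norm (op_sub A B f) \<le> (opnorm A + opnorm B) * l2norm f"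
      by (simp add: algebra_simps)
  qed
  then show "bounded_op (op_sub A B)"
    unfolding bounded_op_iff using l2_linear_op_sub A B bounded_op_l2_linear by blast
  show "opnorm (op_sub A B) \<le> opnorm A + opnorm B"
    using bound by (rule opnorm_least) (simp add: opnorm_nonneg A B)
qed

lemma bounded_op_scaled:
  assumes A: "bounded_op A"
  shows "bounded_op (\<lambda>f. vsmult c (A f))" "opnorm (\<lambda>f. vsmult c (A f)) \<le> cmod c * opnorm A"
proof -
  have bound: "\<forall>f\<in>l2. l2norm (vsmult c (A f)) \<le> (cmod c * opnorm A) * l2norm f"
    using A by (simp add: l2norm_smult l2norm_le_opnorm mult_left_mono mult.assoc)
  then show "bounded_op (\<lambda>f. vsmult c (A f))"
    unfolding bounded_op_iff using l2_linear_scaled A bounded_op_l2_linear by blast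
  show "opnorm (\<lambda>f. vsmult c (A f)) \<le> cmod c * opnorm A"
    using bound by (rule opnorm_least) (simp add: opnorm_nonneg A)
qed

section \<open>Singular values and Schatten classes\<close>

lemma l2_linear_sum:
  fixes n :: nat
  assumes A: "l2_linear A" and v: "\<forall>k<n. v k \<in> l2"
  shows "(\<lambda>i. \<Sum>k<n. c k * v k i) \<in> l2 \<and>
    A (\<lambda>i. \<Sum>k<n. c k * v k i) = (\<lambda>i. \<Sum>k<n. c k * A (v k) i)"
  using v
proof (induction n)
  case 0
  then show ?case
    using l2_linear_zero[OF A] by simp
next
  case (Suc n)
  have split: "(\<lambda>i. \<Sum>k<Suc n. c k * v k i) = vadd (\<lambda>i. \<Sum>k<n. c k * v k i) (vsmult (c n) (v n))"
    by (simp add: fun_eq_iff)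
  show ?case
    unfolding split using Suc A by (simp add: l2_linear_vadd l2_linear_vsmult fun_eq_iff)
qed

lemma rank_le_zero_op: "rank_le (\<lambda>f i. 0) n"
  unfolding rank_le_def by (auto intro!: exI[of _ "\<lambda>k i. 0"] exI[of _ "\<lambda>k. 0"])

lemma rank_le_zero: "rank_le F 0 \<Longrightarrow> f \<in> l2 \<Longrightarrow> F f = (\<lambda>i. 0)"
  unfolding rank_le_def by auto

lemma rank_le_Suc:
  assumes "rank_le F n"
  shows "rank_le F (Suc n)"
proof -
  obtain v where v: "\<forall>k<n. v k \<in> l2" and F: "\<forall>f\<in>l2. \<exists>c. F f = (\<lambda>i. \<Sum>k<n. c k * v k i)"
    using assms unfolding rank_le_def by blast
  define v' where "v' = v(n := (\<lambda>i. 0))"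
  have "\<forall>k<Suc n. v' k \<in> l2"
    using v by (auto simp: less_Suc_eq v'_def)
  moreover have "\<exists>c. F f = (\<lambda>i. \<Sum>k<Suc n. c k * v' k i)" if "f \<in> l2" for f
  proof -
    obtain c where "F f = (\<lambda>i. \<Sum>k<n. c k * v k i)"
      using F \<open>f \<in> l2\<close> by blast
    then show ?thesis
      by (intro exI[of _ c]) (simp add: v'_def)
  qed
  ultimately show ?thesis
    unfolding rank_le_def by blast
qed

lemma rank_le_comp:
  assumes A: "l2_linear A" and C: "\<forall>f\<in>l2. C f \<in> l2" and F: "rank_le F n"
  shows "rank_le (\<lambda>f. A (F (C f))) n"
proof -
  obtain v where v: "\<forall>k<n. v k \<in> l2" and Fv: "\<forall>f\<in>l2. \<exists>c. F f = (\<lambda>i. \<Sum>k<n. c k * v k i)"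
    using F unfolding rank_le_def by blast
  show ?thesis
    unfolding rank_le_def
  proof (intro exI[of _ "\<lambda>k. A (v k)"] conjI ballI allI impI)
    show "\<And>k. k < n \<Longrightarrow> A (v k) \<in> l2"
      using v l2_linear_l2[OF A] by blast
    fix f :: "'a vec"
    assume "f \<in> l2"
    then obtain c where c: "F (C f) = (\<lambda>i. \<Sum>k<n. c k * v k i)"
      using Fv C by blast
    show "\<exists>c. A (F (C f)) = (\<lambda>i. \<Sum>k<n. c k * A (v k) i)"
      by (rule exI[of _ c]) (simp add: c l2_linear_sum[OF A v])
  qed
qed

lemma rank_le_sub:
  assumes F: "rank_le F n" and G: "rank_le G m"
  shows "rank_le (op_sub F G) (n + m)"
proof -
  obtain v where v: "\<forall>k<n. v k \<in> l2" and Fv: "\<forall>f\<in>l2. \<exists>c. F f = (\<lambda>i. \<Sum>k<n. c k * v k i)"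
    using F unfolding rank_le_def by blast
  obtain w where w: "\<forall>k<m. w k \<in> l2" and Gw: "\<forall>f\<in>l2. \<exists>c. G f = (\<lambda>i. \<Sum>k<m. c k * w k i)"
    using G unfolding rank_le_def by blast
  have sum_split: "(\<Sum>k<n + m'. h k) = (\<Sum>k<n. h k) + (\<Sum>k<m'. h (n + k))" for h :: "nat \<Rightarrow> complex" and m'
    by (induction m') (simp_all add: algebra_simps)
  define u where "u k = (if k < n then v k else w (k - n))" for k
  show ?thesis
    unfolding rank_le_def
  proof (intro exI[of _ u] conjI ballI allI impI)
    show "\<And>k. k < n + m \<Longrightarrow> u k \<in> l2"
      using v w by (auto simp: u_def)
    fix f :: "'a vec"
    assume f: "f \<in> l2"
    obtain c where c: "F f = (\<lambda>i. \<Sum>k<n. c k * v k i)"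
      using Fv f by blast
    obtain d where d: "G f = (\<lambda>i. \<Sum>k<m. d k * w k i)"
      using Gw f by blast
    define e where "e k = (if k < n then c k else - d (k - n))" for k
    have "(\<Sum>k<n + m. e k * u k i) = F f i - G f i" for i
      by (simp add: sum_split c d e_def u_def sum_negf)
    then show "\<exists>c. op_sub F G f = (\<lambda>i. \<Sum>k<n + m. c k * u k i)"
      by (intro exI[of _ e]) (simp add: fun_eq_iff)
  qed
qed

lemma sing_val_ge:
  "(\<And>F. bounded_op F \<Longrightarrow> rank_le F n \<Longrightarrow> c \<le> opnorm (op_sub X F)) \<Longrightarrow> c \<le> sing_val X n"
  unfolding sing_val_def
  by (rule cInf_greatest) (use bounded_op_zero rank_le_zero_op in blast)+

lemma sing_val_le:
  assumes X: "bounded_op X" and F: "bounded_op F" "rank_le F n"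
  shows "sing_val X n \<le> opnorm (op_sub X F)"
  unfolding sing_val_def
proof (rule cInf_lower)
  show "opnorm (op_sub X F) \<in> {opnorm (op_sub X F) |F. bounded_op F \<and> rank_le F n}"
    using F by blast
  show "bdd_below {opnorm (op_sub X F) |F. bounded_op F \<and> rank_le F n}"
    by (rule bdd_belowI[of _ 0]) (auto intro!: opnorm_nonneg bounded_op_sub(1)[OF X])
qed

lemma sing_val_nonneg: "bounded_op X \<Longrightarrow> 0 \<le> sing_val X n"
  by (rule sing_val_ge) (auto intro!: opnorm_nonneg bounded_op_sub(1))

lemma sing_val_0:
  assumes X: "bounded_op X"
  shows "sing_val X 0 = opnorm X"
proof (rule antisym)
  have "opnorm (op_sub X (\<lambda>f i. 0)) = opnorm X"
    by (rule opnorm_cong) (simp add: fun_eq_iff)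
  then show "sing_val X 0 \<le> opnorm X"
    using sing_val_le[OF X bounded_op_zero rank_le_zero_op] by simp
  show "opnorm X \<le> sing_val X 0"
  proof (rule sing_val_ge)
    fix F :: "'a op"
    assume "rank_le F 0"
    then have "opnorm (op_sub X F) = opnorm X"
      by (intro opnorm_cong) (simp add: rank_le_zero fun_eq_iff)
    then show "opnorm X \<le> opnorm (op_sub X F)"
      by simp
  qed
qed

lemma sing_val_antimono:
  assumes X: "bounded_op X" and "m \<le> n"
  shows "sing_val X n \<le> sing_val X m"
  using \<open>m \<le> n\<close>
proof (induction n rule: dec_induct)
  case (step n)
  have "sing_val X (Suc n) \<le> sing_val X n"
    by (rule sing_val_ge) (rule sing_val_le[OF X _ rank_le_Suc])
  with step show ?case
    by simp
qed simp

lemma sing_val_cong: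
  assumes "\<forall>f\<in>l2. T f = T' f"
  shows "sing_val T n = sing_val T' n"
proof -
  have "opnorm (op_sub T F) = opnorm (op_sub T' F)" for F
    using assms by (intro opnorm_cong) simp
  then show ?thesis
    unfolding sing_val_def by simp
qed

lemma schatten_cong: "\<forall>f\<in>l2. T f = T' f \<Longrightarrow> schatten p T \<Longrightarrow> schatten p T'"
  unfolding schatten_def using bounded_op_cong sing_val_cong by (metis (no_types, lifting) ext)

lemma sing_val_le_mult:
  assumes k: "0 \<le> k"
    and approx: "\<And>F. bounded_op F \<Longrightarrow> rank_le F n \<Longrightarrow> sing_val D n \<le> k * opnorm (op_sub X F)"
  shows "sing_val D n \<le> k * sing_val X n"
proof (cases "k = 0")
  case True
  then show ?thesis
    using approx[OF bounded_op_zero rank_le_zero_op] by simp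
next
  case False
  with k have "0 < k"
    by simp
  have "sing_val D n / k \<le> sing_val X n"
    by (rule sing_val_ge) (use approx \<open>0 < k\<close> in \<open>simp add: pos_divide_le_eq mult.commute\<close>)
  then show ?thesis
    using \<open>0 < k\<close> by (simp add: pos_divide_le_eq mult.commute)
qed

lemma sing_val_comp:
  assumes A: "bounded_op A" and X: "bounded_op X" and C: "bounded_op C"
    and D: "\<forall>f\<in>l2. D f = A (X (C f))"
  shows "bounded_op D" "sing_val D n \<le> opnorm A * opnorm C * sing_val X n"
proof -
  show bD: "bounded_op D"
    by (rule bounded_op_cong[OF _ bounded_op_comp(1)[OF A bounded_op_comp(1)[OF X C]]]) (simp add: D)
  show "sing_val D n \<le> opnorm A * opnorm C * sing_val X n"
  proof (rule sing_val_le_mult)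
    show "0 \<le> opnorm A * opnorm C"
      by (simp add: opnorm_nonneg A C)
    fix F :: "'a op"
    assume F: "bounded_op F" "rank_le F n"
    have "sing_val D n \<le> opnorm (op_sub D (\<lambda>f. A (F (C f))))"
    proof (rule sing_val_le[OF bD])
      show "bounded_op (\<lambda>f. A (F (C f)))"
        by (rule bounded_op_comp(1)[OF A bounded_op_comp(1)[OF F(1) C]])
      show "rank_le (\<lambda>f. A (F (C f))) n"
        by (rule rank_le_comp[OF bounded_op_l2_linear[OF A] _ F(2)])
          (use l2_linear_l2[OF bounded_op_l2_linear[OF C]] in blast)
    qed
    also have "opnorm (op_sub D (\<lambda>f. A (F (C f)))) = opnorm (\<lambda>f. A (op_sub X F (C f)))"
    proof (intro opnorm_cong ballI)
      fix f :: "'a vec"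
      assume "f \<in> l2"
      then have "C f \<in> l2"
        using C by (simp add: bounded_op_l2_linear l2_linear_l2)
      then show "op_sub D (\<lambda>f. A (F (C f))) f = A (op_sub X F (C f))"
        using D A X F(1) \<open>f \<in> l2\<close>
        by (simp only: op_sub_apply l2_linear_vsub bounded_op_l2_linear l2_linear_l2)
    qed
    also have "\<dots> \<le> opnorm A * opnorm (\<lambda>f. op_sub X F (C f))"
      by (rule bounded_op_comp(2)[OF A bounded_op_comp(1)[OF bounded_op_sub(1)[OF X F(1)] C]])
    also have "\<dots> \<le> opnorm A * (opnorm (op_sub X F) * opnorm C)"
      by (rule mult_left_mono[OF bounded_op_comp(2)[OF bounded_op_sub(1)[OF X F(1)] C] opnorm_nonneg[OF A]])
    finally show "sing_val D n \<le> opnorm A * opnorm C * opnorm (op_sub X F)"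
      by (simp add: mult_ac)
  qed
qed

lemma sing_val_sub:
  assumes X: "bounded_op X" and Y: "bounded_op Y"
  shows "sing_val (op_sub X Y) (n + m) \<le> sing_val X n + sing_val Y m"
proof -
  have approx: "sing_val (op_sub X Y) (n + m) \<le> opnorm (op_sub X F) + opnorm (op_sub Y G)"
    if F: "bounded_op F" "rank_le F n" and G: "bounded_op G" "rank_le G m" for F G
  proof -
    have "sing_val (op_sub X Y) (n + m) \<le> opnorm (op_sub (op_sub X Y) (op_sub F G))"
      by (rule sing_val_le[OF bounded_op_sub(1)[OF X Y] bounded_op_sub(1)[OF F(1) G(1)] rank_le_sub[OF F(2) G(2)]])
    also have "\<dots> = opnorm (op_sub (op_sub X F) (op_sub Y G))"
      by (rule opnorm_cong) (simp add: fun_eq_iff)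
    also have "\<dots> \<le> opnorm (op_sub X F) + opnorm (op_sub Y G)"
      by (rule bounded_op_sub(2)[OF bounded_op_sub(1)[OF X F(1)] bounded_op_sub(1)[OF Y G(1)]])
    finally show ?thesis .
  qed
  have "sing_val (op_sub X Y) (n + m) - sing_val X n \<le> opnorm (op_sub Y G)"
    if G: "bounded_op G" "rank_le G m" for G
  proof -
    have "sing_val (op_sub X Y) (n + m) - opnorm (op_sub Y G) \<le> sing_val X n"
      by (rule sing_val_ge) (use approx G in fastforce)
    then show ?thesis
      by simp
  qed
  then have "sing_val (op_sub X Y) (n + m) - sing_val X n \<le> sing_val Y m"
    by (intro sing_val_ge)
  then show ?thesis
    by simp
qed

lemma powr_add_le:
  fixes a b p :: real
  assumes "0 \<le> a" "0 \<le> b" "0 \<le> p"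
  shows "(a + b) powr p \<le> 2 powr p * (a powr p + b powr p)"
proof -
  have "(a + b) powr p \<le> (2 * max a b) powr p"
    by (rule powr_mono2) (use assms in auto)
  also have "\<dots> = 2 powr p * max a b powr p"
    by (rule powr_mult)
  also have "\<dots> \<le> 2 powr p * (a powr p + b powr p)"
    by (intro mult_left_mono) (simp_all add: max_def)
  finally show ?thesis .
qed

lemma summable_comp_div2:
  fixes g :: "nat \<Rightarrow> real"
  assumes g: "summable g" "\<And>n. 0 \<le> g n"
  shows "summable (\<lambda>j. g (j div 2))"
proof (rule bounded_imp_summable)
  have doubled: "(\<Sum>j<2 * N. g (j div 2)) = 2 * (\<Sum>k<N. g k)" for N
  proof (induction N)
    case (Suc N)
    have "2 * Suc N = Suc (Suc (2 * N))"
      by simp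
    then show ?case
      using Suc by (simp only: sum.lessThan_Suc) simp
  qed simp
  fix n
  have "(\<Sum>j\<le>n. g (j div 2)) \<le> (\<Sum>j<2 * Suc n. g (j div 2))"
    by (rule sum_mono2) (use g in auto)
  also have "\<dots> \<le> 2 * suminf g"
    using sum_le_suminf[OF g(1), of "{..<Suc n}"] g(2) by (simp add: doubled)
  finally show "(\<Sum>j\<le>n. g (j div 2)) \<le> 2 * suminf g" .
qed (use g in simp)

lemma schatten_bounded_op: "schatten p X \<Longrightarrow> bounded_op X"
  by (simp add: schatten_def)

lemma schatten_sub:
  assumes p: "0 \<le> p" and X: "schatten p X" and Y: "schatten p Y"
  shows "schatten p (op_sub X Y)"
proof -
  have bX: "bounded_op X" and bY: "bounded_op Y" and bXY: "bounded_op (op_sub X Y)"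
    using X Y by (auto simp: schatten_def bounded_op_sub)
  have sX: "summable (\<lambda>n. sing_val X n powr p)" and sY: "summable (\<lambda>n. sing_val Y n powr p)"
    using X Y by (auto simp: schatten_def)
  have "summable (\<lambda>j. sing_val (op_sub X Y) j powr p)"
  proof (rule summable_comparison_test'[where N = 0])
    show "summable (\<lambda>j. 2 powr p * (sing_val X (j div 2) powr p + sing_val Y (j div 2) powr p))"
      using summable_comp_div2[of "\<lambda>k. 2 powr p * (sing_val X k powr p + sing_val Y k powr p)"]
      by (simp add: summable_mult summable_add sX sY)
    fix j :: nat
    have "sing_val (op_sub X Y) j \<le> sing_val (op_sub X Y) (j div 2 + j div 2)"
      by (rule sing_val_antimono[OF bXY]) simp
    also have "\<dots> \<le> sing_val X (j div 2) + sing_val Y (j div 2)"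
      by (rule sing_val_sub[OF bX bY])
    finally have "sing_val (op_sub X Y) j powr p \<le> (sing_val X (j div 2) + sing_val Y (j div 2)) powr p"
      by (rule powr_mono2[OF p sing_val_nonneg[OF bXY]])
    also have "\<dots> \<le> 2 powr p * (sing_val X (j div 2) powr p + sing_val Y (j div 2) powr p)"
      by (rule powr_add_le[OF sing_val_nonneg[OF bX] sing_val_nonneg[OF bY] p])
    finally show "norm (sing_val (op_sub X Y) j powr p)
        \<le> 2 powr p * (sing_val X (j div 2) powr p + sing_val Y (j div 2) powr p)"
      by simp
  qed
  then show ?thesis
    unfolding schatten_def using bXY by simp
qed

lemma schatten_comp:
  assumes p: "0 < p" and A: "bounded_op A" and X: "schatten p X" and C: "bounded_op C"
    and D: "\<forall>f\<in>l2. D f = A (X (C f))"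
  shows "schatten p D" "snorm p D \<le> opnorm A * opnorm C * snorm p X"
proof -
  have bX: "bounded_op X" and sX: "summable (\<lambda>n. sing_val X n powr p)"
    using X by (simp_all add: schatten_def)
  define k where "k = opnorm A * opnorm C"
  have k: "0 \<le> k"
    by (simp add: k_def opnorm_nonneg A C)
  note ideal = sing_val_comp[OF A bX C D]
  have le: "sing_val D n powr p \<le> k powr p * sing_val X n powr p" for n
  proof -
    have "sing_val D n powr p \<le> (k * sing_val X n) powr p"
      using p sing_val_nonneg[OF ideal(1)] ideal(2) by (intro powr_mono2) (auto simp: k_def)
    also have "\<dots> = k powr p * sing_val X n powr p"
      by (rule powr_mult)
    finally show ?thesis .
  qed
  have sD: "summable (\<lambda>n. sing_val D n powr p)"
    by (rule summable_comparison_test'[where N = 0, OF summable_mult[OF sX, of "k powr p"]]) (use le in simp)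
  then show "schatten p D"
    unfolding schatten_def using ideal(1) by simp
  have "(\<Sum>n. sing_val D n powr p) \<le> k powr p * (\<Sum>n. sing_val X n powr p)"
    using suminf_le[OF le sD summable_mult[OF sX]] by (simp add: suminf_mult[OF sX])
  then have "snorm p D \<le> (k powr p * (\<Sum>n. sing_val X n powr p)) powr (1 / p)"
    unfolding snorm_def using p sD by (intro powr_mono2) (auto intro!: suminf_nonneg)
  also have "\<dots> = k * snorm p X"
    using p k by (simp add: snorm_def powr_mult powr_powr)
  finally show "snorm p D \<le> opnorm A * opnorm C * snorm p X"
    by (simp add: k_def)
qed

lemma opnorm_le_snorm:
  assumes p: "0 < p" and X: "schatten p X"
  shows "opnorm X \<le> snorm p X"
proof -
  have bX: "bounded_op X" and sX: "summable (\<lambda>n. sing_val X n powr p)"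
    using X by (auto simp: schatten_def)
  have "sing_val X 0 powr p \<le> (\<Sum>n. sing_val X n powr p)"
    using sum_le_suminf[OF sX, of "{0}"] by simp
  then have "(sing_val X 0 powr p) powr (1 / p) \<le> snorm p X"
    unfolding snorm_def by (intro powr_mono2) (use p in simp_all)
  then show ?thesis
    using p sing_val_nonneg[OF bX] by (simp add: powr_powr sing_val_0[OF bX])
qed

lemma snorm_nonneg: "0 \<le> snorm p X"
  by (simp add: snorm_def)

section \<open>Invertible operators and their perturbations\<close>

definition invertible_with_bound :: "('i::countable) op \<Rightarrow> real \<Rightarrow> bool" where
  "invertible_with_bound M K \<longleftrightarrow> 0 < K \<and> l2_linear M \<and> (\<forall>y\<in>l2. \<exists>x\<in>l2. M x = y) \<and>
     (\<forall>x\<in>l2. l2norm x \<le> K * l2norm (M x))"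

definition inv_op :: "('i::countable) op \<Rightarrow> 'i op" where
  "inv_op M y = (THE x. x \<in> l2 \<and> M x = y)"

lemma invertible_inj:
  assumes M: "invertible_with_bound M K" and "x1 \<in> l2" "x2 \<in> l2" "M x1 = M x2"
  shows "x1 = x2"
proof -
  have "l2norm (vsub x1 x2) \<le> K * l2norm (M (vsub x1 x2))"
    using M assms by (simp add: invertible_with_bound_def)
  also have "M (vsub x1 x2) = (\<lambda>i. 0)"
    using M assms by (simp add: invertible_with_bound_def l2_linear_vsub fun_eq_iff)
  finally have "l2norm (vsub x1 x2) \<le> 0"
    by (simp only: l2norm_zero mult_zero_right)
  then have "l2norm (vsub x1 x2) = 0"
    using l2norm_nonneg[of "vsub x1 x2"] by linarith
  then have "vsub x1 x2 = (\<lambda>i. 0)"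
    using l2norm_eq_0_iff[OF vsub_l2[OF assms(2,3)]] by blast
  then show ?thesis
    by (auto simp: fun_eq_iff)
qed

lemma inv_op_l2_inverse:
  assumes M: "invertible_with_bound M K" and y: "y \<in> l2"
  shows "inv_op M y \<in> l2 \<and> M (inv_op M y) = y"
proof -
  obtain x where x: "x \<in> l2" "M x = y"
    using M y by (auto simp: invertible_with_bound_def)
  have "inv_op M y = x"
    unfolding inv_op_def by (rule the_equality) (use x invertible_inj[OF M] in auto)
  with x show ?thesis
    by simp
qed

lemmas inv_op_l2 = inv_op_l2_inverse[THEN conjunct1]
lemmas f_inv_op_f = inv_op_l2_inverse[THEN conjunct2]

lemma inv_op_f_f:
  assumes M: "invertible_with_bound M K" and x: "x \<in> l2"
  shows "inv_op M (M x) = x"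
proof -
  have "M x \<in> l2"
    using M x by (simp add: invertible_with_bound_def l2_linear_l2)
  then show ?thesis
    using invertible_inj[OF M _ x] inv_op_l2_inverse[OF M] by metis
qed

lemma invertible_image_eq:
  assumes M: "invertible_with_bound M K"
  shows "M ` l2 = l2"
proof
  show "M ` l2 \<subseteq> l2"
    using M by (auto simp: invertible_with_bound_def l2_linear_l2)
  show "l2 \<subseteq> M ` l2"
    using M by (auto simp: invertible_with_bound_def image_iff)
qed

lemma inv_op_bound:
  assumes M: "invertible_with_bound M K" and y: "y \<in> l2"
  shows "l2norm (inv_op M y) \<le> K * l2norm y"
  using M inv_op_l2_inverse[OF M y] by (auto simp: invertible_with_bound_def)

lemma bounded_op_inv_op:
  assumes M: "invertible_with_bound M K"
  shows "bounded_op (inv_op M)" "opnorm (inv_op M) \<le> K"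
proof -
  have lin: "l2_linear M"
    using M by (simp add: invertible_with_bound_def)
  have "l2_linear (inv_op M)"
    unfolding l2_linear_def
  proof (intro conjI ballI allI)
    fix f g :: "'a vec" and c :: complex
    assume f: "f \<in> l2" and g: "g \<in> l2"
    show "inv_op M f \<in> l2"
      by (rule inv_op_l2[OF M f])
    have "vadd f g = M (vadd (inv_op M f) (inv_op M g))"
      using inv_op_l2_inverse[OF M f] inv_op_l2_inverse[OF M g] by (simp add: l2_linear_vadd[OF lin])
    then show "inv_op M (vadd f g) = vadd (inv_op M f) (inv_op M g)"
      using inv_op_l2_inverse[OF M f] inv_op_l2_inverse[OF M g] by (simp add: inv_op_f_f[OF M])
    have "vsmult c f = M (vsmult c (inv_op M f))"
      using inv_op_l2_inverse[OF M f] by (simp add: l2_linear_vsmult[OF lin])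
    then show "inv_op M (vsmult c f) = vsmult c (inv_op M f)"
      using inv_op_l2_inverse[OF M f] by (simp add: inv_op_f_f[OF M])
  qed
  then show "bounded_op (inv_op M)"
    unfolding bounded_op_iff using inv_op_bound[OF M] by blast
  show "opnorm (inv_op M) \<le> K"
    using M inv_op_bound[OF M] by (intro opnorm_least) (auto simp: invertible_with_bound_def)
qed

lemma bounded_below_perturb:
  assumes M: "invertible_with_bound M K" and E: "bounded_op E" and small: "opnorm E * K \<le> 1 / 2"
    and x: "x \<in> l2"
  shows "l2norm x \<le> 2 * K * l2norm (vadd (M x) (E x))"
proof -
  have K: "0 < K" and Mx: "M x \<in> l2" and Ex: "E x \<in> l2"
    using M E x by (simp_all add: invertible_with_bound_def l2_linear_l2 bounded_op_l2_linear)
  have "M x = vsub (vadd (M x) (E x)) (E x)"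
    by (simp add: fun_eq_iff)
  then have "l2norm (M x) \<le> l2norm (vadd (M x) (E x)) + l2norm (E x)"
    using l2norm_vsub_le[of "vadd (M x) (E x)" "E x"] Mx Ex by simp
  also have "\<dots> \<le> l2norm (vadd (M x) (E x)) + opnorm E * l2norm x"
    using l2norm_le_opnorm[OF E x] by simp
  finally have "K * l2norm (M x) \<le> K * (l2norm (vadd (M x) (E x)) + opnorm E * l2norm x)"
    using K by (intro mult_left_mono) simp_all
  also have "\<dots> = K * l2norm (vadd (M x) (E x)) + (opnorm E * K) * l2norm x"
    by (simp add: algebra_simps)
  moreover have "(opnorm E * K) * l2norm x \<le> 1 / 2 * l2norm x"
    using small l2norm_nonneg by (rule mult_right_mono)
  moreover have "l2norm x \<le> K * l2norm (M x)"
    using M x by (simp add: invertible_with_bound_def)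
  ultimately show ?thesis
    by linarith
qed

text \<open>M x + E x = y means that x is a fixed point of the contraction x \<mapsto> M^-1 (y - E x).\<close>

lemma surj_perturb:
  assumes M: "invertible_with_bound M K" and E: "bounded_op E" and small: "opnorm E * K \<le> 1 / 2"
    and y: "y \<in> l2"
  shows "\<exists>x\<in>l2. vadd (M x) (E x) = y"
proof -
  define u where "u X = vsub y (E (vec_of X))" for X :: "'a l2t"
  have u: "u X \<in> l2" for X
    unfolding u_def using y E by (simp add: l2_linear_l2 bounded_op_l2_linear)
  define F where "F X = Abs_l2t (inv_op M (u X))" for X
  have "dist (F X1) (F X2) \<le> 1 / 2 * dist X1 X2" for X1 X2
  proof -
    have "dist (F X1) (F X2) = l2norm (vsub (inv_op M (u X1)) (inv_op M (u X2)))"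
      by (simp add: F_def dist_l2t_eq Abs_l2t_inverse inv_op_l2[OF M] u)
    also have "vsub (inv_op M (u X1)) (inv_op M (u X2)) = inv_op M (vsub (u X1) (u X2))"
      by (rule l2_linear_vsub[symmetric, OF bounded_op_l2_linear[OF bounded_op_inv_op(1)[OF M]] u u])
    also have "l2norm (inv_op M (vsub (u X1) (u X2))) \<le> K * l2norm (vsub (u X1) (u X2))"
      using u by (simp add: inv_op_bound[OF M])
    also have "vsub (u X1) (u X2) = E (vsub (vec_of X2) (vec_of X1))"
      using bounded_op_l2_linear[OF E] by (simp add: u_def l2_linear_vsub fun_eq_iff)
    also have "K * l2norm \<dots> \<le> K * (opnorm E * dist X1 X2)"
    proof (rule mult_left_mono)
      show "l2norm (E (vsub (vec_of X2) (vec_of X1))) \<le> opnorm E * dist X1 X2"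
        using l2norm_le_opnorm[OF E, of "vsub (vec_of X2) (vec_of X1)"]
        by (simp add: dist_l2t_eq l2norm_vsub_commute[of "vec_of X1" "vec_of X2"])
      show "0 \<le> K"
        using M by (simp add: invertible_with_bound_def)
    qed
    also have "\<dots> = (opnorm E * K) * dist X1 X2"
      by (simp add: mult_ac)
    also have "\<dots> \<le> 1 / 2 * dist X1 X2"
      using small by (rule mult_right_mono) simp
    finally show ?thesis .
  qed
  then obtain X where "F X = X"
    using banach_fix_type[of "1 / 2" F] by auto
  then have "vec_of X = inv_op M (u X)"
    using inv_op_l2[OF M u] by (metis F_def Abs_l2t_inverse)
  then have "M (vec_of X) = u X"
    using f_inv_op_f[OF M u] by simp
  then show ?thesis
    by (intro bexI[of _ "vec_of X"]) (simp_all add: u_def fun_eq_iff)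
qed

lemma invertible_with_bound_perturb:
  assumes M: "invertible_with_bound M K" and E: "bounded_op E" and small: "opnorm E * K \<le> 1 / 2"
  shows "invertible_with_bound (\<lambda>x. vadd (M x) (E x)) (2 * K)"
proof -
  have "l2_linear (\<lambda>x. vadd (M x) (E x))"
    using M bounded_op_l2_linear[OF E]
    unfolding invertible_with_bound_def l2_linear_def by (simp add: fun_eq_iff algebra_simps)
  then show ?thesis
    using M bounded_below_perturb[OF assms] surj_perturb[OF assms]
    by (simp add: invertible_with_bound_def)
qed

section \<open>The Cayley transform and its resolvent\<close>

lemma unitary_bounded_op: "unitary_op U \<Longrightarrow> bounded_op U"
  by (simp add: unitary_op_def)

lemma unitary_l2_linear: "unitary_op U \<Longrightarrow> l2_linear U"
  by (simp add: unitary_op_def bounded_op_l2_linear)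

lemma unitary_l2: "unitary_op U \<Longrightarrow> f \<in> l2 \<Longrightarrow> U f \<in> l2"
  by (simp add: unitary_l2_linear l2_linear_l2)

lemma unitary_inner:
  assumes U: "unitary_op U" and x: "x \<in> l2" and y: "y \<in> l2"
  shows "inner (Abs_l2t (U x)) (Abs_l2t (U y)) = inner (Abs_l2t x) (Abs_l2t y)"
proof -
  have isometry: "l2norm (U f) = l2norm f" if "f \<in> l2" for f
    using U that by (simp add: unitary_op_def)
  have Ux: "U x \<in> l2" and Uy: "U y \<in> l2"
    using x y by (simp_all add: unitary_l2[OF U])
  have "Abs_l2t (U x) + Abs_l2t (U y) = Abs_l2t (U (vadd x y))"
    using Ux Uy x y by (simp add: Abs_l2t_vadd l2_linear_vadd[OF unitary_l2_linear[OF U]])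
  then have "norm (Abs_l2t (U x) + Abs_l2t (U y)) = norm (Abs_l2t x + Abs_l2t y)"
    using x y by (simp add: norm_Abs_l2t isometry unitary_l2[OF U] Abs_l2t_vadd[symmetric])
  moreover have "norm (Abs_l2t (U x)) = norm (Abs_l2t x)" "norm (Abs_l2t (U y)) = norm (Abs_l2t y)"
    using x y Ux Uy by (simp_all add: norm_Abs_l2t isometry)
  ultimately show ?thesis
    by (simp add: dot_norm)
qed

text \<open>A fixed vector x of U is orthogonal to the range of U - Id, since
  <U y - y, x> = <U y, U x> - <y, x> = 0; density of that range forces x = 0.\<close>

lemma unitary_fixed_vector_eq_0:
  assumes U: "unitary_op U" and dense: "dense_in_l2 (cayley_dom U)" and x: "x \<in> l2"
    and fixed: "U x = x"
  shows "x = (\<lambda>i. 0)"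
proof (rule ccontr)
  assume "x \<noteq> (\<lambda>i. 0)"
  then have "l2norm x > 0"
    using l2norm_eq_0_iff[OF x] l2norm_nonneg[of x] by simp
  then obtain g where "g \<in> cayley_dom U" and close: "l2norm (vsub x g) < l2norm x"
    using dense x unfolding dense_in_l2_def by blast
  then obtain y where y: "y \<in> l2" and g: "g = vsub (U y) y"
    unfolding cayley_dom_def by blast
  have g_l2: "g \<in> l2"
    using g y by (simp add: unitary_l2[OF U])
  define X G where "X = Abs_l2t x" and "G = Abs_l2t g"
  have "inner X G = inner (Abs_l2t (U x)) (Abs_l2t (U y)) - inner (Abs_l2t x) (Abs_l2t y)"
    using g y by (simp add: X_def G_def fixed Abs_l2t_vsub unitary_l2[OF U] inner_diff_right)
  then have "inner X G = 0"
    by (simp add: unitary_inner[OF U x y])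
  moreover have "(norm (X - G))\<^sup>2 = (norm X)\<^sup>2 + (norm G)\<^sup>2 - 2 * inner X G"
    using dot_norm_neg[of X G] by simp
  ultimately have "(norm X)\<^sup>2 \<le> (norm (X - G))\<^sup>2"
    by simp
  then have "norm X \<le> norm (X - G)"
    by (rule power2_le_imp_le) simp
  then show False
    using close x g_l2 by (simp add: X_def G_def Abs_l2t_vsub[symmetric] norm_Abs_l2t)
qed

lemma unitary_minus_id_inj:
  assumes U: "unitary_op U" and dense: "dense_in_l2 (cayley_dom U)"
    and x: "x \<in> l2" and y: "y \<in> l2" and eq: "vsub (U x) x = vsub (U y) y"
  shows "x = y"
proof -
  have "U (vsub x y) = vsub (U x) (U y)"
    by (rule l2_linear_vsub[OF unitary_l2_linear[OF U] x y])
  also have "\<dots> = vsub x y"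
    using fun_cong[OF eq] by (auto simp: fun_eq_iff algebra_simps)
  finally have "vsub x y = (\<lambda>i. 0)"
    by (rule unitary_fixed_vector_eq_0[OF U dense vsub_l2[OF x y]])
  then show ?thesis
    by (auto simp: fun_eq_iff)
qed

lemma cayley_apply:
  assumes U: "unitary_op U" and dense: "dense_in_l2 (cayley_dom U)" and x: "x \<in> l2"
  shows "cayley U (vsub (U x) x) = vsmult \<i> (vadd (U x) x)"
proof -
  have "(THE x'. x' \<in> l2 \<and> vsub (U x') x' = vsub (U x) x) = x"
    by (rule the_equality) (use x unitary_minus_id_inj[OF U dense] in auto)
  then show ?thesis
    by (simp add: cayley_def Let_def)
qed

text \<open>(C(U) - z)(U - Id) = i (U + Id) - z (U - Id) = (i - z) U + (i + z).\<close>

definition cayley_factor :: "('i::countable) op \<Rightarrow> complex \<Rightarrow> 'i op" where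
  "cayley_factor U z x = vadd (vsmult (\<i> - z) (U x)) (vsmult (\<i> + z) x)"

lemma cayley_shift_eq:
  assumes U: "unitary_op U" and dense: "dense_in_l2 (cayley_dom U)" and x: "x \<in> l2"
  shows "vsub (cayley U (vsub (U x) x)) (vsmult z (vsub (U x) x)) = cayley_factor U z x"
  unfolding cayley_apply[OF U dense x] cayley_factor_def by (simp add: fun_eq_iff algebra_simps)

lemma l2_linear_cayley_factor: "l2_linear U \<Longrightarrow> l2_linear (cayley_factor U z)"
  unfolding l2_linear_def cayley_factor_def by (simp add: fun_eq_iff algebra_simps)

lemma cayley_factor_diff:
  "cayley_factor V z x = vadd (cayley_factor U z x) (vsmult (\<i> - z) (op_sub V U x))"
  unfolding cayley_factor_def by (simp add: fun_eq_iff algebra_simps)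

lemma cayley_resolvent_eq:
  assumes U: "unitary_op U" and dense: "dense_in_l2 (cayley_dom U)"
    and M: "invertible_with_bound (cayley_factor U z) K" and y: "y \<in> l2"
  shows "cayley_resolvent U z y = vsub (U (inv_op (cayley_factor U z) y)) (inv_op (cayley_factor U z) y)"
  unfolding cayley_resolvent_def
proof (rule the_equality)
  let ?x = "inv_op (cayley_factor U z) y"
  show "vsub (U ?x) ?x \<in> cayley_dom U \<and> vsub (cayley U (vsub (U ?x) ?x)) (vsmult z (vsub (U ?x) ?x)) = y"
    using inv_op_l2_inverse[OF M y] by (simp add: cayley_dom_def cayley_shift_eq[OF U dense])
  fix d
  assume d: "d \<in> cayley_dom U \<and> vsub (cayley U d) (vsmult z d) = y"
  then obtain x where x: "x \<in> l2" "d = vsub (U x) x"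
    unfolding cayley_dom_def by blast
  then have "cayley_factor U z x = y"
    using d cayley_shift_eq[OF U dense] by simp
  then show "d = vsub (U ?x) ?x"
    using x inv_op_f_f[OF M x(1)] by simp
qed

lemma cayley_resolvent_setI:
  assumes U: "unitary_op U" and dense: "dense_in_l2 (cayley_dom U)"
    and M: "invertible_with_bound (cayley_factor U z) K"
  shows "z \<in> cayley_resolvent_set U"
proof -
  let ?shift = "\<lambda>d. vsub (cayley U d) (vsmult z d)"
  have "bij_betw ?shift (cayley_dom U) l2"
  proof (rule bij_betw_imageI)
    show "inj_on ?shift (cayley_dom U)"
    proof (rule inj_onI)
      fix d1 d2
      assume d1: "d1 \<in> cayley_dom U" and d2: "d2 \<in> cayley_dom U" and eq: "?shift d1 = ?shift d2"
      obtain x1 where x1: "x1 \<in> l2" "d1 = vsub (U x1) x1"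
        using d1 unfolding cayley_dom_def by blast
      obtain x2 where x2: "x2 \<in> l2" "d2 = vsub (U x2) x2"
        using d2 unfolding cayley_dom_def by blast
      have "cayley_factor U z x1 = cayley_factor U z x2"
        using eq x1 x2 by (simp add: cayley_shift_eq[OF U dense])
      then have "x1 = x2"
        by (rule invertible_inj[OF M x1(1) x2(1)])
      then show "d1 = d2"
        using x1 x2 by simp
    qed
    have "?shift ` cayley_dom U = cayley_factor U z ` l2"
      unfolding cayley_dom_def image_image by (rule image_cong) (simp_all add: cayley_shift_eq[OF U dense])
    also have "\<dots> = l2"
      by (rule invertible_image_eq[OF M])
    finally show "?shift ` cayley_dom U = l2" .
  qed
  moreover have "bounded_op (cayley_resolvent U z)"
  proof (rule bounded_op_cong)
    show "bounded_op (op_sub (\<lambda>y. U (inv_op (cayley_factor U z) y)) (inv_op (cayley_factor U z)))"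
      using bounded_op_comp(1)[OF unitary_bounded_op[OF U] bounded_op_inv_op(1)[OF M]]
        bounded_op_inv_op(1)[OF M] by (rule bounded_op_sub(1))
    show "\<forall>y\<in>l2. op_sub (\<lambda>y. U (inv_op (cayley_factor U z) y)) (inv_op (cayley_factor U z)) y =
        cayley_resolvent U z y"
      by (simp add: cayley_resolvent_eq[OF U dense M])
  qed
  ultimately show ?thesis
    unfolding cayley_resolvent_set_def by blast
qed

lemma cayley_resolvent_cayley_factor:
  assumes U: "unitary_op U" and dense: "dense_in_l2 (cayley_dom U)"
    and inj: "inj_on (\<lambda>d. vsub (cayley U d) (vsmult z d)) (cayley_dom U)" and x: "x \<in> l2"
  shows "cayley_resolvent U z (cayley_factor U z x) = vsub (U x) x"
  unfolding cayley_resolvent_def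
proof (rule the_equality)
  show dom: "vsub (U x) x \<in> cayley_dom U \<and>
      vsub (cayley U (vsub (U x) x)) (vsmult z (vsub (U x) x)) = cayley_factor U z x"
    using x by (simp add: cayley_dom_def cayley_shift_eq[OF U dense])
  show "d = vsub (U x) x"
    if "d \<in> cayley_dom U \<and> vsub (cayley U d) (vsmult z d) = cayley_factor U z x" for d
    using inj_onD[OF inj, of d "vsub (U x) x"] that dom by simp
qed

lemma l2norm_le_cayley_factor:
  assumes U: "unitary_op U" and x: "x \<in> l2"
    and KR: "l2norm (vsub (U x) x) \<le> KR * l2norm (cayley_factor U z x)"
  shows "2 * l2norm x \<le> (1 + cmod (\<i> - z) * KR) * l2norm (cayley_factor U z x)"
proof -
  have Mx: "cayley_factor U z x \<in> l2" and Ux: "vsub (U x) x \<in> l2"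
    using x U by (simp_all add: l2_linear_l2 l2_linear_cayley_factor unitary_l2_linear unitary_l2[OF U])
  have "2 * l2norm x = l2norm (vsmult (2 * \<i>) x)"
    by (simp add: l2norm_smult norm_mult)
  also have "vsmult (2 * \<i>) x = vsub (cayley_factor U z x) (vsmult (\<i> - z) (vsub (U x) x))"
    by (simp add: cayley_factor_def fun_eq_iff algebra_simps)
  also have "l2norm \<dots> \<le> l2norm (cayley_factor U z x) + cmod (\<i> - z) * l2norm (vsub (U x) x)"
    using l2norm_vsub_le[OF Mx vsmult_l2[OF Ux, of "\<i> - z"]] by (simp add: l2norm_smult)
  also have "\<dots> \<le> l2norm (cayley_factor U z x) + cmod (\<i> - z) * (KR * l2norm (cayley_factor U z x))"
    using KR by (simp add: mult_left_mono)
  finally show ?thesis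
    by (simp add: algebra_simps)
qed

lemma cayley_resolvent_setD:
  assumes U: "unitary_op U" and dense: "dense_in_l2 (cayley_dom U)"
    and z: "z \<in> cayley_resolvent_set U"
  obtains K where "invertible_with_bound (cayley_factor U z) K"
proof -
  let ?shift = "\<lambda>d. vsub (cayley U d) (vsmult z d)"
  let ?M = "cayley_factor U z"
  have bij: "bij_betw ?shift (cayley_dom U) l2" and R: "bounded_op (cayley_resolvent U z)"
    using z by (simp_all add: cayley_resolvent_set_def)
  obtain KR where KR: "0 \<le> KR" "\<forall>f\<in>l2. l2norm (cayley_resolvent U z f) \<le> KR * l2norm f"
    using bounded_op_bound_nonneg[OF R] by blast
  have lin: "l2_linear ?M"
    by (rule l2_linear_cayley_factor[OF unitary_l2_linear[OF U]])
  have surj: "\<exists>x\<in>l2. ?M x = y" if "y \<in> l2" for y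
  proof -
    have "y \<in> ?shift ` cayley_dom U"
      using that bij by (simp add: bij_betw_def)
    then obtain x where "x \<in> l2" "?shift (vsub (U x) x) = y"
      unfolding cayley_dom_def by blast
    then show ?thesis
      by (auto simp: cayley_shift_eq[OF U dense])
  qed
  have R_M: "cayley_resolvent U z (?M x) = vsub (U x) x" if "x \<in> l2" for x
    by (rule cayley_resolvent_cayley_factor[OF U dense bij_betw_imp_inj_on[OF bij] that])
  define K where "K = (1 + cmod (\<i> - z) * KR) / 2"
  have bound: "l2norm x \<le> K * l2norm (?M x)" if x: "x \<in> l2" for x
  proof -
    have "l2norm (vsub (U x) x) \<le> KR * l2norm (?M x)"
      using KR(2) R_M[OF x] l2_linear_l2[OF lin x] by metis
    then have "2 * l2norm x \<le> (1 + cmod (\<i> - z) * KR) * l2norm (?M x)"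
      by (rule l2norm_le_cayley_factor[OF U x])
    then show ?thesis
      by (simp add: K_def)
  qed
  have "invertible_with_bound ?M K"
    unfolding invertible_with_bound_def using lin surj bound KR(1) by (simp add: K_def add_pos_nonneg)
  then show ?thesis
    by (rule that)
qed

section \<open>Continuity of the resolvent\<close>

text \<open>The trick is to apply Ut to both equations cayley_factor Ut z xt = y = cayley_factor Us z xs.\<close>

lemma cayley_factor_resolvent_diff:
  assumes Us: "unitary_op Us" and Ut: "unitary_op Ut" and xs: "xs \<in> l2" and xt: "xt \<in> l2"
    and es: "cayley_factor Us z xs = y" and et: "cayley_factor Ut z xt = y"
  shows "cayley_factor Ut z (vsub (vsub (Ut xt) xt) (vsub (Us xs) xs)) = vsmult (2 * \<i>) (op_sub Ut Us xs)"
proof (rule ext)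
  fix i
  define a b where "a = \<i> - z" and "b = \<i> + z"
  have lin: "l2_linear Ut"
    by (rule unitary_l2_linear[OF Ut])
  have l2: "Ut xt \<in> l2" "Us xs \<in> l2"
    using xs xt by (simp_all add: unitary_l2[OF Ut] unitary_l2[OF Us])
  have Ut_w: "Ut (vsub (vsub (Ut xt) xt) (vsub (Us xs) xs)) = vsub (vsub (Ut (Ut xt)) (Ut xt)) (vsub (Ut (Us xs)) (Ut xs))"
    using xs xt l2 by (simp add: l2_linear_vsub[OF lin])
  have "Ut y = vadd (vsmult a (Ut (Ut xt))) (vsmult b (Ut xt))"
    using et[symmetric] xt l2 by (simp add: cayley_factor_def l2_linear_vadd[OF lin] l2_linear_vsmult[OF lin] a_def b_def)
  then have e1: "Ut y i = a * Ut (Ut xt) i + b * Ut xt i"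
    by simp
  have "Ut y = vadd (vsmult a (Ut (Us xs))) (vsmult b (Ut xs))"
    using es[symmetric] xs l2 by (simp add: cayley_factor_def l2_linear_vadd[OF lin] l2_linear_vsmult[OF lin] a_def b_def)
  then have e2: "Ut y i = a * Ut (Us xs) i + b * Ut xs i"
    by simp
  have e3: "y i = a * Ut xt i + b * xt i"
    using fun_cong[OF et, of i] by (simp add: cayley_factor_def a_def b_def)
  have e4: "y i = a * Us xs i + b * xs i"
    using fun_cong[OF es, of i] by (simp add: cayley_factor_def a_def b_def)
  have "cayley_factor Ut z (vsub (vsub (Ut xt) xt) (vsub (Us xs) xs)) i
      = a * ((Ut (Ut xt) i - Ut xt i) - (Ut (Us xs) i - Ut xs i)) + b * ((Ut xt i - xt i) - (Us xs i - xs i))"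
    by (simp add: cayley_factor_def Ut_w a_def b_def)
  also have "\<dots> = (a * Ut (Ut xt) i + b * Ut xt i) - (a * Ut (Us xs) i + b * Ut xs i)
      - (a * Ut xt i + b * xt i) + (a * Us xs i + b * xs i) + (a + b) * (Ut xs i - Us xs i)"
    by (simp add: algebra_simps)
  also have "\<dots> = (a + b) * (Ut xs i - Us xs i)"
    by (simp only: e1[symmetric] e2[symmetric] e3[symmetric] e4[symmetric]) simp
  finally show "cayley_factor Ut z (vsub (vsub (Ut xt) xt) (vsub (Us xs) xs)) i = vsmult (2 * \<i>) (op_sub Ut Us xs) i"
    by (simp add: a_def b_def)
qed

lemma cayley_resolvent_diff_eq:
  assumes Us: "unitary_op Us" and Ut: "unitary_op Ut"
    and ds: "dense_in_l2 (cayley_dom Us)" and dt: "dense_in_l2 (cayley_dom Ut)"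
    and Ms: "invertible_with_bound (cayley_factor Us z) Ks"
    and Mt: "invertible_with_bound (cayley_factor Ut z) Kt" and y: "y \<in> l2"
  shows "op_sub (cayley_resolvent Ut z) (cayley_resolvent Us z) y =
    vsmult (2 * \<i>) (inv_op (cayley_factor Ut z) (op_sub Ut Us (inv_op (cayley_factor Us z) y)))"
proof -
  define xs xt where "xs = inv_op (cayley_factor Us z) y" and "xt = inv_op (cayley_factor Ut z) y"
  define w where "w = vsub (vsub (Ut xt) xt) (vsub (Us xs) xs)"
  have xs: "xs \<in> l2" "cayley_factor Us z xs = y" and xt: "xt \<in> l2" "cayley_factor Ut z xt = y"
    using inv_op_l2_inverse[OF Ms y] inv_op_l2_inverse[OF Mt y] by (simp_all add: xs_def xt_def)
  have "w \<in> l2"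
    using xs xt by (simp add: w_def unitary_l2[OF Us] unitary_l2[OF Ut])
  then have "w = inv_op (cayley_factor Ut z) (cayley_factor Ut z w)"
    by (rule inv_op_f_f[OF Mt, symmetric])
  also have "cayley_factor Ut z w = vsmult (2 * \<i>) (op_sub Ut Us xs)"
    unfolding w_def by (rule cayley_factor_resolvent_diff[OF Us Ut xs(1) xt(1) xs(2) xt(2)])
  also have "inv_op (cayley_factor Ut z) \<dots> = vsmult (2 * \<i>) (inv_op (cayley_factor Ut z) (op_sub Ut Us xs))"
    by (rule l2_linear_vsmult[OF bounded_op_l2_linear[OF bounded_op_inv_op(1)[OF Mt]]])
      (simp add: xs unitary_l2[OF Us] unitary_l2[OF Ut])
  finally have "w = vsmult (2 * \<i>) (inv_op (cayley_factor Ut z) (op_sub Ut Us xs))" .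
  moreover have "op_sub (cayley_resolvent Ut z) (cayley_resolvent Us z) y = w"
    using y by (simp add: w_def xs_def xt_def cayley_resolvent_eq[OF Us ds Ms] cayley_resolvent_eq[OF Ut dt Mt])
  ultimately show ?thesis
    by (simp only: xs_def)
qed

lemma cayley_factor_perturb:
  assumes Ms: "invertible_with_bound (cayley_factor Us z) K" and D: "bounded_op (op_sub Ut Us)"
    and small: "cmod (\<i> - z) * opnorm (op_sub Ut Us) * K \<le> 1 / 2"
  shows "invertible_with_bound (cayley_factor Ut z) (2 * K)"
proof -
  let ?E = "\<lambda>x. vsmult (\<i> - z) (op_sub Ut Us x)"
  have "0 < K"
    using Ms by (simp add: invertible_with_bound_def)
  then have "opnorm ?E * K \<le> cmod (\<i> - z) * opnorm (op_sub Ut Us) * K"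
    using bounded_op_scaled(2)[OF D] by (simp add: mult_right_mono)
  then have "invertible_with_bound (\<lambda>x. vadd (cayley_factor Us z x) (?E x)) (2 * K)"
    using small by (intro invertible_with_bound_perturb[OF Ms bounded_op_scaled(1)[OF D]]) simp
  moreover have "(\<lambda>x. vadd (cayley_factor Us z x) (?E x)) = cayley_factor Ut z"
    by (rule ext) (rule cayley_factor_diff[symmetric])
  ultimately show ?thesis
    by simp
qed

lemma cayley_resolvent_diff_schatten:
  assumes p: "0 < p" and Us: "unitary_op Us" and Ut: "unitary_op Ut"
    and ds: "dense_in_l2 (cayley_dom Us)" and dt: "dense_in_l2 (cayley_dom Ut)"
    and Ms: "invertible_with_bound (cayley_factor Us z) K" and S: "schatten p (op_sub Ut Us)"
    and small: "cmod (\<i> - z) * opnorm (op_sub Ut Us) * K \<le> 1 / 2"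
  shows "z \<in> cayley_resolvent_set Ut"
    "schatten p (op_sub (cayley_resolvent Ut z) (cayley_resolvent Us z))"
    "snorm p (op_sub (cayley_resolvent Ut z) (cayley_resolvent Us z)) \<le> 4 * K\<^sup>2 * snorm p (op_sub Ut Us)"
proof -
  have K: "0 < K"
    using Ms by (simp add: invertible_with_bound_def)
  have Mt: "invertible_with_bound (cayley_factor Ut z) (2 * K)"
    by (rule cayley_factor_perturb[OF Ms schatten_bounded_op[OF S] small])
  show "z \<in> cayley_resolvent_set Ut"
    by (rule cayley_resolvent_setI[OF Ut dt Mt])
  let ?A = "\<lambda>v. vsmult (2 * \<i>) (inv_op (cayley_factor Ut z) v)"
  have A: "bounded_op ?A" "opnorm ?A \<le> 4 * K"
    using bounded_op_scaled[OF bounded_op_inv_op(1)[OF Mt], of "2 * \<i>"] bounded_op_inv_op(2)[OF Mt]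
    by (auto simp: norm_mult)
  note Ns = bounded_op_inv_op[OF Ms]
  have eq: "\<forall>y\<in>l2. op_sub (cayley_resolvent Ut z) (cayley_resolvent Us z) y =
      ?A (op_sub Ut Us (inv_op (cayley_factor Us z) y))"
    using cayley_resolvent_diff_eq[OF Us Ut ds dt Ms Mt] by blast
  note ideal = schatten_comp[OF p A(1) S Ns(1)]
  show "schatten p (op_sub (cayley_resolvent Ut z) (cayley_resolvent Us z))"
    by (rule ideal(1)[OF eq])
  have "snorm p (op_sub (cayley_resolvent Ut z) (cayley_resolvent Us z))
      \<le> opnorm ?A * opnorm (inv_op (cayley_factor Us z)) * snorm p (op_sub Ut Us)"
    by (rule ideal(2)[OF eq])
  also have "\<dots> \<le> (4 * K) * K * snorm p (op_sub Ut Us)"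
    using A(2) Ns(2) K by (intro mult_right_mono mult_mono opnorm_nonneg Ns(1) snorm_nonneg) simp_all
  finally show "snorm p (op_sub (cayley_resolvent Ut z) (cayley_resolvent Us z)) \<le> 4 * K\<^sup>2 * snorm p (op_sub Ut Us)"
    by (simp add: power2_eq_square mult_ac)
qed

lemma cayley_resolvent_locally_lipschitz:
  assumes p: "0 < p" and Us: "unitary_op Us" and ds: "dense_in_l2 (cayley_dom Us)"
    and z: "z \<in> cayley_resolvent_set Us"
  obtains \<delta> C where "0 < \<delta>"
    "\<And>Ut. unitary_op Ut \<Longrightarrow> dense_in_l2 (cayley_dom Ut) \<Longrightarrow> schatten p (op_sub Ut Us) \<Longrightarrow>
      snorm p (op_sub Ut Us) < \<delta> \<Longrightarrow>
      z \<in> cayley_resolvent_set Ut \<and>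
      schatten p (op_sub (cayley_resolvent Ut z) (cayley_resolvent Us z)) \<and>
      snorm p (op_sub (cayley_resolvent Ut z) (cayley_resolvent Us z)) \<le> C * snorm p (op_sub Ut Us)"
proof -
  obtain K where Ms: "invertible_with_bound (cayley_factor Us z) K"
    using cayley_resolvent_setD[OF Us ds z] .
  have K: "0 < K"
    using Ms by (simp add: invertible_with_bound_def)
  define \<delta> where "\<delta> = 1 / (2 * (cmod (\<i> - z) + 1) * K)"
  have \<delta>: "0 < \<delta>"
    unfolding \<delta>_def using K by (intro divide_pos_pos mult_pos_pos) (auto intro: add_nonneg_pos)
  have small: "cmod (\<i> - z) * opnorm (op_sub Ut Us) * K \<le> 1 / 2"
    if "schatten p (op_sub Ut Us)" "snorm p (op_sub Ut Us) < \<delta>" for Ut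
  proof -
    have "opnorm (op_sub Ut Us) \<le> \<delta>"
      using opnorm_le_snorm[OF p that(1)] that(2) by simp
    then have "cmod (\<i> - z) * opnorm (op_sub Ut Us) * K \<le> cmod (\<i> - z) * \<delta> * K"
      using K by (simp add: mult_left_mono mult_right_mono)
    also have "\<dots> = cmod (\<i> - z) / (2 * (cmod (\<i> - z) + 1))"
      using K by (simp add: \<delta>_def)
    also have "\<dots> \<le> 1 / 2"
      by (simp add: divide_le_eq) (smt (verit) norm_ge_zero)
    finally show ?thesis .
  qed
  show thesis
  proof (rule that[OF \<delta>])
    fix Ut
    assume "unitary_op Ut" "dense_in_l2 (cayley_dom Ut)" "schatten p (op_sub Ut Us)"
      "snorm p (op_sub Ut Us) < \<delta>"
    then show "z \<in> cayley_resolvent_set Ut \<and>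
      schatten p (op_sub (cayley_resolvent Ut z) (cayley_resolvent Us z)) \<and>
      snorm p (op_sub (cayley_resolvent Ut z) (cayley_resolvent Us z)) \<le> 4 * K\<^sup>2 * snorm p (op_sub Ut Us)"
      using cayley_resolvent_diff_schatten[OF p Us _ ds _ Ms _ small] by blast
  qed
qed

lemma cayley_resolvent_tendsto:
  assumes p: "0 < p" and Us: "unitary_op Us" and ds: "dense_in_l2 (cayley_dom Us)"
    and z: "z \<in> cayley_resolvent_set Us"
    and V: "\<forall>\<^sub>F t in F. unitary_op (V t) \<and> dense_in_l2 (cayley_dom (V t)) \<and> schatten p (op_sub (V t) Us)"
    and lim: "((\<lambda>t. snorm p (op_sub (V t) Us)) \<longlongrightarrow> 0) F"
  shows "\<forall>\<^sub>F t in F. z \<in> cayley_resolvent_set (V t) \<and>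
      schatten p (op_sub (cayley_resolvent (V t) z) (cayley_resolvent Us z))"
    "((\<lambda>t. snorm p (op_sub (cayley_resolvent (V t) z) (cayley_resolvent Us z))) \<longlongrightarrow> 0) F"
proof -
  obtain \<delta> C where \<delta>: "0 < \<delta>" and near: "\<And>Ut. unitary_op Ut \<Longrightarrow> dense_in_l2 (cayley_dom Ut) \<Longrightarrow>
      schatten p (op_sub Ut Us) \<Longrightarrow> snorm p (op_sub Ut Us) < \<delta> \<Longrightarrow>
      z \<in> cayley_resolvent_set Ut \<and>
      schatten p (op_sub (cayley_resolvent Ut z) (cayley_resolvent Us z)) \<and>
      snorm p (op_sub (cayley_resolvent Ut z) (cayley_resolvent Us z)) \<le> C * snorm p (op_sub Ut Us)"
    using cayley_resolvent_locally_lipschitz[OF p Us ds z] by blast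
  have ev: "\<forall>\<^sub>F t in F. z \<in> cayley_resolvent_set (V t) \<and>
      schatten p (op_sub (cayley_resolvent (V t) z) (cayley_resolvent Us z)) \<and>
      snorm p (op_sub (cayley_resolvent (V t) z) (cayley_resolvent Us z)) \<le> C * snorm p (op_sub (V t) Us)"
    using eventually_conj[OF V order_tendstoD(2)[OF lim \<delta>]] by eventually_elim (use near in blast)
  then show "\<forall>\<^sub>F t in F. z \<in> cayley_resolvent_set (V t) \<and>
      schatten p (op_sub (cayley_resolvent (V t) z) (cayley_resolvent Us z))"
    by eventually_elim blast
  show "((\<lambda>t. snorm p (op_sub (cayley_resolvent (V t) z) (cayley_resolvent Us z))) \<longlongrightarrow> 0) F"
  proof (rule tendsto_sandwich[OF _ _ tendsto_const tendsto_mult_right_zero[OF lim]])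
    show "\<forall>\<^sub>F t in F. 0 \<le> snorm p (op_sub (cayley_resolvent (V t) z) (cayley_resolvent Us z))"
      by (simp add: snorm_nonneg)
    show "\<forall>\<^sub>F t in F. snorm p (op_sub (cayley_resolvent (V t) z) (cayley_resolvent Us z))
        \<le> C * snorm p (op_sub (V t) Us)"
      using ev by eventually_elim blast
  qed
qed

theorem mainTheorem17:
  fixes p :: real and I :: "real set" and U :: "real \<Rightarrow> ('i::countable) op"
  assumes "1 \<le> p"
    and "\<forall>t\<in>I. U t \<in> U_p p"
    and "\<forall>s\<in>I. ((\<lambda>t. snorm p (op_sub (U t) (U s))) \<longlongrightarrow> 0) (at s within I)"
    and "\<forall>t\<in>I. dense_in_l2 (cayley_dom (U t))"
  shows "\<forall>s\<in>I. \<forall>z. z \<notin> cayley_spec (U s) \<longrightarrow>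
           (\<forall>\<^sub>F t in at s within I. z \<notin> cayley_spec (U t) \<and>
               schatten p (op_sub (cayley_resolvent (U t) z) (cayley_resolvent (U s) z))) \<and>
           ((\<lambda>t. snorm p (op_sub (cayley_resolvent (U t) z) (cayley_resolvent (U s) z)))
              \<longlongrightarrow> 0) (at s within I)"
proof (intro ballI allI impI)
  fix s z
  assume s: "s \<in> I" and "z \<notin> cayley_spec (U s)"
  then have z: "z \<in> cayley_resolvent_set (U s)"
    by (simp add: cayley_spec_def)
  have p: "0 < p"
    using assms(1) by simp
  have unitary: "unitary_op (U t)" and U_id: "schatten p (op_sub (U t) id)"
    and dense: "dense_in_l2 (cayley_dom (U t))" if "t \<in> I" for t
    using assms(2,4) that by (simp_all add: U_p_def)
  have "schatten p (op_sub (U t) (U s))" if "t \<in> I" for t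
  proof (rule schatten_cong[rotated])
    show "schatten p (op_sub (op_sub (U t) id) (op_sub (U s) id))"
      using p by (intro schatten_sub[OF _ U_id[OF that] U_id[OF s]]) simp
  qed (simp add: fun_eq_iff)
  then have "\<forall>\<^sub>F t in at s within I. unitary_op (U t) \<and> dense_in_l2 (cayley_dom (U t)) \<and>
      schatten p (op_sub (U t) (U s))"
    using unitary dense by (simp add: eventually_at_filter)
  note resolvent = cayley_resolvent_tendsto[OF p unitary[OF s] dense[OF s] z this assms(3)[rule_format, OF s]]
  show "(\<forall>\<^sub>F t in at s within I. z \<notin> cayley_spec (U t) \<and>
      schatten p (op_sub (cayley_resolvent (U t) z) (cayley_resolvent (U s) z))) \<and>
    ((\<lambda>t. snorm p (op_sub (cayley_resolvent (U t) z) (cayley_resolvent (U s) z))) \<longlongrightarrow> 0) (at s within I)"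
    using resolvent by (simp add: cayley_spec_def)
qed

end
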